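(* For every simplifiable hyperoctahedral category of partitions $\mathcal C$, the set $F(\mathcal C)$ is a proper $S_0$-invariant subgroup of $E$. The map $\mathcal C\mapsto F(\mathcal C)$ is a bijection from the set of simplifiable hyperoctahedral categories of partitions onto the set of proper $S_0$-invariant subgroups of $E$, with inverse $H\mapsto\mathcal C_H$; i.e. $F(\mathcal C_H)=H$ and $\mathcal C_{F(\mathcal C)}=\mathcal C$. Both maps preserve inclusion, so $F$ is a lattice isomorphism.
   Context: A partition $p\in P(k,l)$ ($k,l\ge 0$) is a partition of the disjoint union of $k$ ordered upper points $1,\dots,k$ and $l$ ordered lower points $1',\dots,l'$ into nonempty disjoint subsets called blocks; $P=\bigcup_{k,l}P(k,l)$. Operations on partitions: the tensor product $p\otimes q$ (horizontal juxtaposition, $q$ placed to the right of $p$); the composition of $p\in P(k,l)$ with $q\in P(l,m)$ (stack $p$ on top of $q$, identify the lower points of $p$ with the upper points of $q$, merge blocks connected through these middle points, then erase the middle points and any block lying entirely among them), giving a partition in $P(k,m)$; the involution $p^*$ (reflection of $p$ upside down); and rotation (moving the leftmost, resp. rightmost, point of one row to the leftmost, resp. rightmost, position of the other row, keeping the blocks). A category of partitions is a subset $\mathcal C\subseteq P$ containing the pair partition $\sqcap\in P(0,2)$ (one block consisting of two lower points) and the identity partition $|\in P(1,1)$ (one block $\{1,1'\}$), and closed under these four operations. Special partitions: the four block $b_4\in P(0,4)$ (one block of four lower points); the double singleton $\uparrow\otimes\uparrow\in P(0,2)$ (two one-point blocks); the pair positioner $\rho\in P(3,3)$ with blocks $\{1,2,2',3'\}$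 and $\{3,1'\}$. A category of partitions $\mathcal C$ is hyperoctahedral if $b_4\in\mathcal C$ and $\uparrow\otimes\uparrow\notin\mathcal C$; it is simplifiable hyperoctahedral if moreover $\rho\in\mathcal C$. Let $L=\{a_1,a_2,\dots\}$, $\mathbb F_L$ the free group on $L$, $G=\mathbb Z_2^{*\infty}$ the free product of countably many copies of $\mathbb Z/2\mathbb Z$ generated by $a_1,a_2,\dots$ with $a_i^2=e$, and $\pi:\mathbb F_L\to G$ the canonical surjection. A labelling $\ell$ of a partition $p$ assigns pairwise distinct letters of $L$ to the blocks of $p$; $w(p,\ell)\in\mathbb F_L$ is the word obtained by reading the labels of the points of $p$ starting at the leftmost upper point, going through the upper row from left to right and then through the lower row from right to left. For a category $\mathcal C$, $F(\mathcal C)=\{\pi(w(p,\ell)) : p\in\mathcal C,\ \ell\text{ a labelling of }p\}$. $E\le G$ is the subgroup of elements of even length. $S_0\subseteq\mathrm{End}(G)$ is the subsemigroup generated by: (1) for every $n\in\mathbb N$ and every choice of indices $i(1),\dots,i(n)$, the endomorphism with $a_k\mapsto a_{i(k)}$ for $1\le k\le n$ and $a_k\mapsto a_k$ for $k>n$; (2) for every $k$, the conjugation $w\mapsto a_kwa_k$. A subgroup $H$ is $S_0$-invariant if $\phi(H)\subseteq H$ for all $\phi\in S_0$. For a proper $S_0$-invariant subgroup $H$ of $E$, $\mathcal C_H=\{p\in P : \pi(w(p,\ell))\in H\text{ for some labelling }\ell\text{ of }p\}$. *)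

theory Defs
  imports "HOL-Algebra.Group" "HOL-Library.Disjoint_Sets"
begin

text \<open>Points of a partition in P(k,l): upper points Up 0 .. Up (k-1) (= 1..k)
  and lower points Lo 0 .. Lo (l-1) (= 1'..l').\<close>
datatype pt = Up nat | Lo nat

type_synonym part = "nat \<times> nat \<times> pt set set"

definition points :: "nat \<Rightarrow> nat \<Rightarrow> pt set" where
  "points k l = Up ` {..<k} \<union> Lo ` {..<l}"

definition upk :: "part \<Rightarrow> nat" where "upk p = fst p"
definition lol :: "part \<Rightarrow> nat" where "lol p = fst (snd p)"
definition blocks :: "part \<Rightarrow> pt set set" where "blocks p = snd (snd p)"

definition is_part :: "part \<Rightarrow> bool" where
  "is_part p \<longleftrightarrow> partition_on (points (upk p) (lol p)) (blocks p)"

definition Parts :: "part set" where "Parts = {p. is_part p}"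

definition map_blocks :: "(pt \<Rightarrow> pt) \<Rightarrow> pt set set \<Rightarrow> pt set set" where
  "map_blocks f B = (\<lambda>b. f ` b) ` B"

fun shift_pt :: "nat \<Rightarrow> nat \<Rightarrow> pt \<Rightarrow> pt" where
  "shift_pt k l (Up i) = Up (i + k)"
| "shift_pt k l (Lo j) = Lo (j + l)"

definition tensor :: "part \<Rightarrow> part \<Rightarrow> part" where
  "tensor p q = (upk p + upk q, lol p + lol q,
      blocks p \<union> map_blocks (shift_pt (upk p) (lol p)) (blocks q))"

fun flip_pt :: "pt \<Rightarrow> pt" where
  "flip_pt (Up i) = Lo i"
| "flip_pt (Lo j) = Up j"

definition involution :: "part \<Rightarrow> part" where
  "involution p = (lol p, upk p, map_blocks flip_pt (blocks p))"

text \<open>Composition: p on top of q; points of the stacked picture.\<close>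
datatype pt3 = Top nat | Mid nat | Bot nat

fun emb_upper :: "pt \<Rightarrow> pt3" where
  "emb_upper (Up i) = Top i"
| "emb_upper (Lo j) = Mid j"

fun emb_lower :: "pt \<Rightarrow> pt3" where
  "emb_lower (Up j) = Mid j"
| "emb_lower (Lo j) = Bot j"

fun emb_res :: "pt \<Rightarrow> pt3" where
  "emb_res (Up i) = Top i"
| "emb_res (Lo j) = Bot j"

definition same_block_rel :: "(pt \<Rightarrow> pt3) \<Rightarrow> pt set set \<Rightarrow> (pt3 \<times> pt3) set" where
  "same_block_rel e B = {(e x, e y) | x y. \<exists>b\<in>B. x \<in> b \<and> y \<in> b}"

text \<open>Composition of p in P(k,l) with q in P(l,m) (only meaningful when lol p = upk q):
  blocks connected through the middle points are merged, middle points are erased,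
  and blocks lying entirely in the middle disappear.\<close>
definition compose :: "part \<Rightarrow> part \<Rightarrow> part" where
  "compose p q =
     (let R = (same_block_rel emb_upper (blocks p) \<union> same_block_rel emb_lower (blocks q))\<^sup>*;
          A = points (upk p) (lol q)
      in (upk p, lol q, (\<lambda>x. {y \<in> A. (emb_res x, emb_res y) \<in> R}) ` A))"

fun rotUL_pt :: "pt \<Rightarrow> pt" where
  "rotUL_pt (Up 0) = Lo 0"
| "rotUL_pt (Up (Suc i)) = Up i"
| "rotUL_pt (Lo j) = Lo (Suc j)"

fun rotLU_pt :: "pt \<Rightarrow> pt" where
  "rotLU_pt (Lo 0) = Up 0"
| "rotLU_pt (Lo (Suc j)) = Lo j"
| "rotLU_pt (Up i) = Up (Suc i)"

fun rotUR_pt :: "nat \<Rightarrow> nat \<Rightarrow> pt \<Rightarrow> pt" where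
  "rotUR_pt k l (Up i) = (if i = k - 1 then Lo l else Up i)"
| "rotUR_pt k l (Lo j) = Lo j"

fun rotLR_pt :: "nat \<Rightarrow> nat \<Rightarrow> pt \<Rightarrow> pt" where
  "rotLR_pt k l (Lo j) = (if j = l - 1 then Up k else Lo j)"
| "rotLR_pt k l (Up i) = Up i"

text \<open>Leftmost upper point to leftmost lower position (needs upk p > 0).\<close>
definition rot_left_down :: "part \<Rightarrow> part" where
  "rot_left_down p = (upk p - 1, lol p + 1, map_blocks rotUL_pt (blocks p))"

text \<open>Leftmost lower point to leftmost upper position (needs lol p > 0).\<close>
definition rot_left_up :: "part \<Rightarrow> part" where
  "rot_left_up p = (upk p + 1, lol p - 1, map_blocks rotLU_pt (blocks p))"

text \<open>Rightmost upper point to rightmost lower position (needs upk p > 0).\<close>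
definition rot_right_down :: "part \<Rightarrow> part" where
  "rot_right_down p = (upk p - 1, lol p + 1, map_blocks (rotUR_pt (upk p) (lol p)) (blocks p))"

text \<open>Rightmost lower point to rightmost upper position (needs lol p > 0).\<close>
definition rot_right_up :: "part \<Rightarrow> part" where
  "rot_right_up p = (upk p + 1, lol p - 1, map_blocks (rotLR_pt (upk p) (lol p)) (blocks p))"

definition pair_part :: part where "pair_part = (0, 2, {{Lo 0, Lo 1}})"
definition id_part :: part where "id_part = (1, 1, {{Up 0, Lo 0}})"
definition four_block :: part where "four_block = (0, 4, {{Lo 0, Lo 1, Lo 2, Lo 3}})"
definition double_singleton :: part where "double_singleton = (0, 2, {{Lo 0}, {Lo 1}})"
definition pair_positioner :: part where
  "pair_positioner = (3, 3, {{Up 0, Up 1, Lo 1, Lo 2}, {Up 2, Lo 0}})"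

definition category_of_partitions :: "part set \<Rightarrow> bool" where
  "category_of_partitions C \<longleftrightarrow>
     C \<subseteq> Parts \<and> pair_part \<in> C \<and> id_part \<in> C \<and>
     (\<forall>p\<in>C. \<forall>q\<in>C. tensor p q \<in> C) \<and>
     (\<forall>p\<in>C. \<forall>q\<in>C. lol p = upk q \<longrightarrow> compose p q \<in> C) \<and>
     (\<forall>p\<in>C. involution p \<in> C) \<and>
     (\<forall>p\<in>C. 0 < upk p \<longrightarrow> rot_left_down p \<in> C \<and> rot_right_down p \<in> C) \<and>
     (\<forall>p\<in>C. 0 < lol p \<longrightarrow> rot_left_up p \<in> C \<and> rot_right_up p \<in> C)"

definition hyperoctahedral :: "part set \<Rightarrow> bool" where
  "hyperoctahedral C \<longleftrightarrow> category_of_partitions C \<and> four_block \<in> C \<and> double_singleton \<notin> C"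

definition simplifiable_hyperoctahedral :: "part set \<Rightarrow> bool" where
  "simplifiable_hyperoctahedral C \<longleftrightarrow> hyperoctahedral C \<and> pair_positioner \<in> C"

text \<open>Generator a_{i+1} is represented by the letter i :: nat. Elements of G are
  reduced words (no two equal adjacent letters).\<close>

definition reduced :: "nat list \<Rightarrow> bool" where
  "reduced w \<longleftrightarrow> (\<forall>i. Suc i < length w \<longrightarrow> w ! i \<noteq> w ! Suc i)"

fun red :: "nat list \<Rightarrow> nat list" where
  "red [] = []"
| "red (x # xs) = (case red xs of [] \<Rightarrow> [x] | y # ys \<Rightarrow> if x = y then ys else x # y # ys)"

definition Z2free :: "nat list monoid" where
  "Z2free = \<lparr>carrier = {w. reduced w}, mult = (\<lambda>x y. red (x @ y)), one = []\<rparr>"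

definition piw :: "nat list \<Rightarrow> nat list" where
  "piw xs = foldr (\<lambda>i g. [i] \<otimes>\<^bsub>Z2free\<^esub> g) xs \<one>\<^bsub>Z2free\<^esub>"

definition Ev :: "nat list set" where
  "Ev = {w \<in> carrier Z2free. even (length w)}"

definition subst_endo :: "nat \<Rightarrow> (nat \<Rightarrow> nat) \<Rightarrow> nat list \<Rightarrow> nat list" where
  "subst_endo n idx w = piw (map (\<lambda>k. if k < n then idx k else k) w)"

definition conj_endo :: "nat \<Rightarrow> nat list \<Rightarrow> nat list" where
  "conj_endo k w = [k] \<otimes>\<^bsub>Z2free\<^esub> w \<otimes>\<^bsub>Z2free\<^esub> [k]"

inductive_set S0 :: "(nat list \<Rightarrow> nat list) set" where
  gen_subst: "subst_endo n idx \<in> S0"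
| gen_conj: "conj_endo k \<in> S0"
| comp: "\<phi> \<in> S0 \<Longrightarrow> \<psi> \<in> S0 \<Longrightarrow> \<phi> \<circ> \<psi> \<in> S0"

definition S0_invariant :: "nat list set \<Rightarrow> bool" where
  "S0_invariant H \<longleftrightarrow> (\<forall>\<phi>\<in>S0. \<phi> ` H \<subseteq> H)"

definition proper_S0_inv_subgroup_of_E :: "nat list set \<Rightarrow> bool" where
  "proper_S0_inv_subgroup_of_E H \<longleftrightarrow>
     subgroup H Z2free \<and> H \<subseteq> Ev \<and> H \<noteq> Ev \<and> S0_invariant H"

definition block_of :: "part \<Rightarrow> pt \<Rightarrow> pt set" where
  "block_of p x = (THE b. b \<in> blocks p \<and> x \<in> b)"

definition labelling :: "part \<Rightarrow> (pt set \<Rightarrow> nat) \<Rightarrow> bool" where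
  "labelling p lab \<longleftrightarrow> inj_on lab (blocks p)"

definition word :: "part \<Rightarrow> (pt set \<Rightarrow> nat) \<Rightarrow> nat list" where
  "word p lab = map (\<lambda>i. lab (block_of p (Up i))) [0..<upk p]
             @ rev (map (\<lambda>j. lab (block_of p (Lo j))) [0..<lol p])"

definition Fcat :: "part set \<Rightarrow> nat list set" where
  "Fcat C = {piw (word p lab) | p lab. p \<in> C \<and> labelling p lab}"

definition CH :: "nat list set \<Rightarrow> part set" where
  "CH H = {p \<in> Parts. \<exists>lab. labelling p lab \<and> piw (word p lab) \<in> H}"

end

theory Submission
  imports Defs
begin

text \<open>
  Every partition is the fibre partition of a labelling, and whether it lies in a category C
  depends only on its word. Rotations make the set of words of C closed under cyclic shifts
  and reversal; composing with the four block and the pair positioner lets one cancel a pair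
  aa, triple a letter, move a pair aa past any letter and merge adjacent letters, and together
  these make the words closed under reduction in Z2free and under arbitrary substitutions of
  letters. Hence the reduced words of C form an S0-invariant subgroup; it lies in E and is
  proper because a single letter, resp. a word ab with a \<noteq> b, would yield the double
  singleton. Conversely, for an S0-invariant subgroup H every category operation acts on words
  by multiplication, inversion, conjugation or substitution, so the partitions with a word in
  H form a category, and the two constructions are mutually inverse.
\<close>

section \<open>Reduced words\<close>

definition cancel_cons :: "nat \<Rightarrow> nat list \<Rightarrow> nat list" where
  "cancel_cons x ys = (case ys of [] \<Rightarrow> [x] | y # ys' \<Rightarrow> if x = y then ys' else x # ys)"

lemma red_Cons: "red (x # xs) = cancel_cons x (red xs)"
  by (simp add: cancel_cons_def split: list.splits)

declare red.simps(2)[simp del]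

lemma reduced_Nil[simp]: "reduced []" by (simp add: reduced_def)
lemma reduced_single[simp]: "reduced [x]" by (simp add: reduced_def)

lemma reduced_Cons:
  "reduced (x # xs) \<longleftrightarrow> reduced xs \<and> (xs = [] \<or> x \<noteq> hd xs)"
proof (cases xs)
  case Nil then show ?thesis by simp
next
  case (Cons y ys)
  show ?thesis
  proof
    assume r: "reduced (x # xs)"
    have "reduced xs" unfolding reduced_def
    proof (intro allI impI)
      fix i assume "Suc i < length xs"
      then show "xs ! i \<noteq> xs ! Suc i" using r[unfolded reduced_def, rule_format, of "Suc i"] by simp
    qed
    moreover have "x \<noteq> hd xs" using r[unfolded reduced_def, rule_format, of 0] Cons by simp
    ultimately show "reduced xs \<and> (xs = [] \<or> x \<noteq> hd xs)" by simp
  next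
    assume a: "reduced xs \<and> (xs = [] \<or> x \<noteq> hd xs)"
    show "reduced (x # xs)" unfolding reduced_def
    proof (intro allI impI)
      fix i assume "Suc i < length (x # xs)"
      then show "(x # xs) ! i \<noteq> (x # xs) ! Suc i"
        using a Cons by (cases i) (auto simp: reduced_def)
    qed
  qed
qed

lemma reduced_cancel_cons: "reduced ys \<Longrightarrow> reduced (cancel_cons x ys)"
  by (auto simp: cancel_cons_def reduced_Cons split: list.splits)

lemma reduced_red[simp]: "reduced (red xs)"
  by (induction xs) (auto simp: red_Cons reduced_cancel_cons)

lemma cancel_cons_twice: "reduced ys \<Longrightarrow> cancel_cons x (cancel_cons x ys) = ys"
  by (auto simp: cancel_cons_def reduced_Cons split: list.splits)

lemma red_reduced: "reduced xs \<Longrightarrow> red xs = xs"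
  by (induction xs) (auto simp: red_Cons reduced_Cons cancel_cons_def split: list.splits)

lemma red_red[simp]: "red (red xs) = red xs"
  by (simp add: red_reduced)

lemma red_append: "red (xs @ ys) = foldr cancel_cons xs (red ys)"
  by (induction xs) (auto simp: red_Cons)

lemma reduced_foldr: "reduced r \<Longrightarrow> reduced (foldr cancel_cons zs r)"
  by (induction zs) (auto simp: reduced_cancel_cons)

lemma foldr_red: "reduced r \<Longrightarrow> foldr cancel_cons (red zs) r = foldr cancel_cons zs r"
proof (induction zs)
  case Nil then show ?case by simp
next
  case (Cons x zs)
  have IH: "foldr cancel_cons (red zs) r = foldr cancel_cons zs r" using Cons by simp
  show ?case
  proof (cases "\<exists>w. red zs = x # w")
    case True
    then obtain w where w: "red zs = x # w" by blast
    have "cancel_cons x (red zs) = w" using w by (simp add: cancel_cons_def)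
    then have "foldr cancel_cons (red (x # zs)) r = foldr cancel_cons w r" by (simp add: red_Cons)
    also have "\<dots> = cancel_cons x (cancel_cons x (foldr cancel_cons w r))"
      using cancel_cons_twice reduced_foldr Cons.prems by simp
    also have "cancel_cons x (foldr cancel_cons w r) = foldr cancel_cons (red zs) r" using w by simp
    finally show ?thesis using IH by simp
  next
    case False
    then have "cancel_cons x (red zs) = x # red zs" by (auto simp: cancel_cons_def split: list.splits)
    then show ?thesis using IH by (simp add: red_Cons)
  qed
qed

lemma red_append_left: "red (red xs @ ys) = red (xs @ ys)"
  by (simp add: red_append foldr_red)

lemma red_append_right: "red (xs @ red ys) = red (xs @ ys)"
  by (simp add: red_append)

lemma red_cancel: "red (xs @ x # x # ys) = red (xs @ ys)"
  by (simp add: red_append cancel_cons_twice red_Cons)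

lemma red_cancel_rev: "red (xs @ rev m @ m @ ys) = red (xs @ ys)"
proof (induction m arbitrary: xs ys rule: rev_induct)
  case Nil then show ?case by simp
next
  case (snoc a m)
  have "xs @ rev (m @ [a]) @ (m @ [a]) @ ys = (xs @ [a]) @ rev m @ m @ a # ys" by simp
  then have "red (xs @ rev (m @ [a]) @ (m @ [a]) @ ys) = red ((xs @ [a]) @ a # ys)"
    using snoc[of "xs @ [a]" "a # ys"] by simp
  also have "\<dots> = red (xs @ ys)" using red_cancel[of xs a ys] by simp
  finally show ?case .
qed

lemma red_rev_self: "red (rev m @ m) = []"
  using red_cancel_rev[of "[]" m "[]"] by simp

lemma red_map: "red (map f (red xs)) = red (map f xs)"
proof (induction xs)
  case Nil then show ?case by simp
next
  case (Cons x xs)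
  show ?case
  proof (cases "\<exists>w. red xs = x # w")
    case True
    then obtain w where w: "red xs = x # w" by blast
    have "red (map f (red (x # xs))) = red (map f w)" using w by (simp add: red_Cons cancel_cons_def)
    also have "\<dots> = cancel_cons (f x) (cancel_cons (f x) (red (map f w)))"
      by (simp add: cancel_cons_twice)
    also have "cancel_cons (f x) (red (map f w)) = red (map f xs)" using Cons w by (simp add: red_Cons)
    finally show ?thesis by (simp add: red_Cons)
  next
    case False
    then have "cancel_cons x (red xs) = x # red xs" by (auto simp: cancel_cons_def split: list.splits)
    then show ?thesis using Cons by (simp add: red_Cons)
  qed
qed

lemma reduced_rev: "reduced xs \<Longrightarrow> reduced (rev xs)"
  unfolding reduced_def
proof (intro allI impI)
  fix i assume r: "\<forall>i. Suc i < length xs \<longrightarrow> xs ! i \<noteq> xs ! Suc i" and i: "Suc i < length (rev xs)"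
  have "xs ! (length xs - Suc (Suc i)) \<noteq> xs ! Suc (length xs - Suc (Suc i))"
    using r i by auto
  moreover have "Suc (length xs - Suc (Suc i)) = length xs - Suc i" using i by simp
  ultimately show "rev xs ! i \<noteq> rev xs ! Suc i" using i by (simp add: rev_nth)
qed

lemma Z2_carrier[simp]: "carrier Z2free = {w. reduced w}" by (simp add: Z2free_def)
lemma Z2_mult[simp]: "x \<otimes>\<^bsub>Z2free\<^esub> y = red (x @ y)" by (simp add: Z2free_def)
lemma Z2_one[simp]: "\<one>\<^bsub>Z2free\<^esub> = []" by (simp add: Z2free_def)

lemma group_Z2: "group Z2free"
proof (rule groupI)
  fix x y z assume "x \<in> carrier Z2free" "y \<in> carrier Z2free" "z \<in> carrier Z2free"
  show "x \<otimes>\<^bsub>Z2free\<^esub> y \<otimes>\<^bsub>Z2free\<^esub> z = x \<otimes>\<^bsub>Z2free\<^esub> (y \<otimes>\<^bsub>Z2free\<^esub> z)"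
    by (simp add: red_append_left red_append_right)
next
  fix x assume "x \<in> carrier Z2free"
  then show "\<exists>y\<in>carrier Z2free. y \<otimes>\<^bsub>Z2free\<^esub> x = \<one>\<^bsub>Z2free\<^esub>"
    by (intro bexI[of _ "rev x"]) (auto simp: red_rev_self reduced_rev)
qed (auto simp: red_reduced)

lemma Z2_inv: "reduced x \<Longrightarrow> inv\<^bsub>Z2free\<^esub> x = rev x"
  by (rule group.inv_equality[OF group_Z2]) (auto simp: red_rev_self reduced_rev)

lemma red_rev: "red (rev xs) = rev (red xs)"
proof -
  have "inv\<^bsub>Z2free\<^esub> (red xs) = red (rev xs)"
    by (rule group.inv_equality[OF group_Z2]) (auto simp: red_append_left red_append_right red_rev_self)
  moreover have "inv\<^bsub>Z2free\<^esub> (red xs) = rev (red xs)" by (simp add: Z2_inv)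
  ultimately show ?thesis by simp
qed

lemma piw_red: "piw xs = red xs"
  unfolding piw_def by (induction xs) (auto simp: red_Cons red_append_right[of "[_]", simplified])


section \<open>Partitions as fibres of label functions\<close>

definition fibre_part :: "nat \<Rightarrow> nat \<Rightarrow> (pt \<Rightarrow> nat) \<Rightarrow> part" where
  "fibre_part k l f = (k, l, (\<lambda>x. {y \<in> points k l. f y = f x}) ` points k l)"

definition label_word ::
  "nat \<Rightarrow> nat \<Rightarrow> (pt \<Rightarrow> nat) \<Rightarrow> nat list" where
  "label_word k l f = map (\<lambda>i. f (Up i)) [0..<k] @ rev (map (\<lambda>j. f (Lo j)) [0..<l])"

lemma upk_fibre_part[simp]: "upk (fibre_part k l f) = k" by (simp add: fibre_part_def upk_def)
lemma lol_fibre_part[simp]: "lol (fibre_part k l f) = l" by (simp add: fibre_part_def lol_def)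
lemma blocks_fibre_part:
  "blocks (fibre_part k l f) = (\<lambda>x. {y \<in> points k l. f y = f x}) ` points k l"
  by (simp add: fibre_part_def blocks_def)

lemma Up_points[simp]: "Up i \<in> points k l \<longleftrightarrow> i < k" by (auto simp: points_def)
lemma Lo_points[simp]: "Lo j \<in> points k l \<longleftrightarrow> j < l" by (auto simp: points_def)
lemma finite_points[simp]: "finite (points k l)" by (simp add: points_def)

lemma word_label_word: "word p lab = label_word (upk p) (lol p) (\<lambda>x. lab (block_of p x))"
  by (simp add: word_def label_word_def)

lemma fibre_part_Parts: "fibre_part k l f \<in> Parts"
  unfolding Parts_def is_part_def mem_Collect_eq upk_fibre_part lol_fibre_part
  by (rule partition_onI) (auto simp: blocks_fibre_part disjnt_def)

lemma partition_on_block_unique: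
  "partition_on A P \<Longrightarrow> x \<in> b \<Longrightarrow> b \<in> P \<Longrightarrow> x \<in> b' \<Longrightarrow> b' \<in> P \<Longrightarrow> b = b'"
  unfolding partition_on_def disjoint_def by blast

lemma block_of_fibre_part:
  "x \<in> points k l \<Longrightarrow> block_of (fibre_part k l f) x = {y \<in> points k l. f y = f x}"
  unfolding block_of_def by (rule the_equality) (auto simp: blocks_fibre_part)

lemma fibre_part_labelling:
  "\<exists>lab. labelling (fibre_part k l f) lab \<and> word (fibre_part k l f) lab = label_word k l f"
proof -
  define lab where "lab = (\<lambda>b::pt set. f (SOME y. y \<in> b))"
  have lb: "x \<in> points k l \<Longrightarrow> lab {y \<in> points k l. f y = f x} = f x" for x
  proof -
    assume "x \<in> points k l"
    then have "\<exists>y. y \<in> {y \<in> points k l. f y = f x}" by blast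
    then have "(SOME y. y \<in> {y \<in> points k l. f y = f x}) \<in> {y \<in> points k l. f y = f x}"
      by (rule someI_ex)
    then show ?thesis by (simp add: lab_def)
  qed
  have "labelling (fibre_part k l f) lab"
    unfolding labelling_def inj_on_def blocks_fibre_part using lb by auto
  moreover have "word (fibre_part k l f) lab = label_word k l f"
    by (simp add: word_def label_word_def block_of_fibre_part lb)
  ultimately show ?thesis by blast
qed

lemma Parts_eq_fibre_part:
  assumes "p \<in> Parts" "labelling p lab"
  shows "p = fibre_part (upk p) (lol p) (\<lambda>x. lab (block_of p x))"
proof -
  have P: "partition_on (points (upk p) (lol p)) (blocks p)"
    using assms(1) by (simp add: Parts_def is_part_def)
  have inj: "inj_on lab (blocks p)" using assms(2) by (simp add: labelling_def)
  let ?A = "points (upk p) (lol p)"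
  have bo: "x \<in> ?A \<Longrightarrow> block_of p x \<in> blocks p \<and> x \<in> block_of p x" for x
  proof -
    assume x: "x \<in> ?A"
    then have "\<exists>!b. b \<in> blocks p \<and> x \<in> b" using P partition_on_block_unique[OF P]
      by (auto simp: partition_on_def)
    then show ?thesis unfolding block_of_def by (rule theI')
  qed
  have bo_eq: "x \<in> b \<Longrightarrow> b \<in> blocks p \<Longrightarrow> block_of p x = b" for x b
  proof -
    assume "x \<in> b" "b \<in> blocks p"
    moreover then have "x \<in> ?A" using P by (auto simp: partition_on_def)
    ultimately show ?thesis using bo[of x] partition_on_block_unique[OF P] by blast
  qed
  have cls: "x \<in> ?A \<Longrightarrow> {y \<in> ?A. lab (block_of p y) = lab (block_of p x)} = block_of p x" for x
  proof
    assume x: "x \<in> ?A"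
    show "{y \<in> ?A. lab (block_of p y) = lab (block_of p x)} \<subseteq> block_of p x"
      using bo inj x by (auto dest: inj_onD)
    show "block_of p x \<subseteq> {y \<in> ?A. lab (block_of p y) = lab (block_of p x)}"
    proof
      fix y assume y: "y \<in> block_of p x"
      then have "y \<in> ?A" using bo[OF x] P by (auto simp: partition_on_def)
      moreover have "block_of p y = block_of p x" using bo_eq[OF y] bo[OF x] by simp
      ultimately show "y \<in> {y \<in> ?A. lab (block_of p y) = lab (block_of p x)}" by simp
    qed
  qed
  have "blocks p = (\<lambda>x. {y \<in> ?A. lab (block_of p y) = lab (block_of p x)}) ` ?A"
  proof
    show "blocks p \<subseteq> (\<lambda>x. {y \<in> ?A. lab (block_of p y) = lab (block_of p x)}) ` ?A"
    proof
      fix b assume b: "b \<in> blocks p"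
      then have "b \<noteq> {}" using P by (auto simp: partition_on_def)
      then obtain x where "x \<in> b" by blast
      moreover then have "x \<in> ?A" using P b by (auto simp: partition_on_def)
      ultimately show "b \<in> (\<lambda>x. {y \<in> ?A. lab (block_of p y) = lab (block_of p x)}) ` ?A"
        using cls bo_eq b by (intro image_eqI[of _ _ x]) auto
    qed
    show "(\<lambda>x. {y \<in> ?A. lab (block_of p y) = lab (block_of p x)}) ` ?A \<subseteq> blocks p"
      using cls bo by auto
  qed
  then show ?thesis by (cases p) (simp add: fibre_part_def upk_def lol_def blocks_def)
qed

lemma Parts_labelling_exists: "p \<in> Parts \<Longrightarrow> \<exists>lab. labelling p lab"
proof -
  assume "p \<in> Parts"
  then have P: "partition_on (points (upk p) (lol p)) (blocks p)" by (simp add: Parts_def is_part_def)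
  then have "blocks p \<subseteq> Pow (points (upk p) (lol p))" by (auto simp: partition_on_def)
  then have "finite (blocks p)" by (meson finite_Pow_iff finite_points finite_subset)
  then obtain lab :: "pt set \<Rightarrow> nat" where "inj_on lab (blocks p)"
    using finite_imp_inj_to_nat_seg by blast
  then show ?thesis by (auto simp: labelling_def)
qed

lemma fibre_part_cong:
  assumes "\<And>x y. x \<in> points k l \<Longrightarrow> y \<in> points k l \<Longrightarrow> f x = f y \<longleftrightarrow> g x = g y"
  shows "fibre_part k l f = fibre_part k l g"
  unfolding fibre_part_def using assms by (auto intro!: image_cong)

lemma factor_through:
  assumes "\<And>x y. x \<in> P \<Longrightarrow> y \<in> P \<Longrightarrow> g' x = g' y \<Longrightarrow> g x = g y"
  shows "\<exists>h. \<forall>x\<in>P. g x = h (g' x)"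
proof -
  define h where "h c = g (SOME x. x \<in> P \<and> g' x = c)" for c
  have "g x = h (g' x)" if x: "x \<in> P" for x
  proof -
    have "\<exists>y. y \<in> P \<and> g' y = g' x" using x by blast
    then have "(SOME y. y \<in> P \<and> g' y = g' x) \<in> P \<and> g' (SOME y. y \<in> P \<and> g' y = g' x) = g' x"
      by (rule someI_ex)
    then show ?thesis using assms x unfolding h_def by metis
  qed
  then show ?thesis by blast
qed

lemma fibre_part_eqD:
  assumes e: "fibre_part k l g = fibre_part k l g'" and x: "x \<in> points k l" and y: "y \<in> points k l" and gy: "g' x = g' y"
  shows "g x = g y"
proof -
  have "{z \<in> points k l. g' z = g' x} \<in> blocks (fibre_part k l g')" using x
    by (auto simp: blocks_fibre_part)
  then have "{z \<in> points k l. g' z = g' x} \<in> blocks (fibre_part k l g)" using e by simp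
  then obtain w where w: "w \<in> points k l" "{z \<in> points k l. g' z = g' x} = {z \<in> points k l. g z = g w}"
    by (auto simp: blocks_fibre_part)
  have "x \<in> {z \<in> points k l. g' z = g' x}" "y \<in> {z \<in> points k l. g' z = g' x}" using x y gy
    by auto
  then show ?thesis using w by auto
qed

lemma label_word_cong:
  assumes "\<And>x. x \<in> points k l \<Longrightarrow> f x = g x"
  shows "label_word k l f = label_word k l g"
  unfolding label_word_def using assms by simp

lemma label_word_comp: "label_word k l (\<lambda>x. h (f x)) = map h (label_word k l f)"
  by (simp add: label_word_def rev_map)

lemma label_word_length[simp]: "length (label_word k l f) = k + l" by (simp add: label_word_def)

lemma map_blocks_fibre_part:
  assumes "g ` points k l = points k' l'" "\<And>x. x \<in> points k l \<Longrightarrow> g' (g x) = x"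
    "\<And>z. z \<in> points k' l' \<Longrightarrow> g (g' z) = z"
  shows "map_blocks g (blocks (fibre_part k l f)) = blocks (fibre_part k' l' (\<lambda>z. f (g' z)))"
proof -
  have gin: "x \<in> points k l \<Longrightarrow> g x \<in> points k' l'" for x using assms(1) by blast
  have g'in: "z \<in> points k' l' \<Longrightarrow> g' z \<in> points k l" for z
    using assms(1,3) by (metis assms(2) imageE)
  have cl: "g ` {y \<in> points k l. f y = f x} = {z \<in> points k' l'. f (g' z) = f (g' (g x))}"
    if x: "x \<in> points k l" for x
  proof
    show "g ` {y \<in> points k l. f y = f x} \<subseteq> {z \<in> points k' l'. f (g' z) = f (g' (g x))}"
      using gin assms(2) x by auto
    show "{z \<in> points k' l'. f (g' z) = f (g' (g x))} \<subseteq> g ` {y \<in> points k l. f y = f x}"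
    proof
      fix z assume z: "z \<in> {z \<in> points k' l'. f (g' z) = f (g' (g x))}"
      then have "g' z \<in> {y \<in> points k l. f y = f x}" using g'in assms(2) x by auto
      then show "z \<in> g ` {y \<in> points k l. f y = f x}" using assms(3) z
        by (metis (no_types, lifting) imageI mem_Collect_eq)
    qed
  qed
  have "map_blocks g (blocks (fibre_part k l f)) = (\<lambda>x. {z \<in> points k' l'. f (g' z) = f (g' (g x))}) ` points k l"
    unfolding map_blocks_def blocks_fibre_part image_image using cl by (auto intro!: image_cong)
  also have "\<dots> = (\<lambda>z'. {z \<in> points k' l'. f (g' z) = f (g' z')}) ` (g ` points k l)"
    by (simp add: image_image)
  finally show ?thesis using assms(1) by (simp add: blocks_fibre_part)
qed

definition word_label :: "nat \<Rightarrow> nat list \<Rightarrow> pt \<Rightarrow> nat" where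
  "word_label k zs x = (case x of Up i \<Rightarrow> zs ! i | Lo j \<Rightarrow> zs ! (length zs - 1 - j))"

lemma label_word_word_label:
  "k \<le> length zs \<Longrightarrow> label_word k (length zs - k) (word_label k zs) = zs"
  by (rule nth_equalityI) (auto simp: label_word_def word_label_def nth_append rev_nth)

definition word_part ::
  "nat list \<Rightarrow> part" where "word_part xs = fibre_part (length xs) 0 (word_label (length xs) xs)"

lemma label_word_word_part: "label_word (length xs) 0 (word_label (length xs) xs) = xs"
  using label_word_word_label[of "length xs" xs] by simp

lemma reduced_in_Fcat:
  assumes "reduced xs" and "word_part xs \<in> C"
  shows "xs \<in> Fcat C"
proof -
  obtain lab where "labelling (word_part xs) lab" "word (word_part xs) lab = xs"
    using fibre_part_labelling label_word_word_part unfolding word_part_def by metis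
  moreover have "piw xs = xs" using assms(1) by (simp add: piw_red red_reduced)
  ultimately show ?thesis
    unfolding Fcat_def using assms(2) by (intro CollectI exI[of _ "word_part xs"] exI[of _ lab]) simp
qed


lemma image_eq_inverseI:
  "(\<And>x. x \<in> A \<Longrightarrow> g x \<in> B) \<Longrightarrow> (\<And>z. z \<in> B \<Longrightarrow> g' z \<in> A) \<Longrightarrow>
   (\<And>z. z \<in> B \<Longrightarrow> g (g' z) = z) \<Longrightarrow> g ` A = B"
  by (auto simp: image_iff) (metis)

lemma involution_fibre_part: "involution (fibre_part k l f) = fibre_part l k (\<lambda>x. f (flip_pt x))"
proof -
  have ff: "flip_pt (flip_pt x) = x" for x by (cases x) auto
  have fp: "flip_pt ` points k l = points l k"
  proof (rule image_eq_inverseI[of _ _ _ flip_pt])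
    show "x \<in> points k l \<Longrightarrow> flip_pt x \<in> points l k" for x by (cases x) auto
    show "z \<in> points l k \<Longrightarrow> flip_pt z \<in> points k l" for z by (cases z) auto
  qed (rule ff)
  show ?thesis unfolding involution_def
    using map_blocks_fibre_part[OF fp, where g'=flip_pt and f=f] ff
      by (simp add: fibre_part_def blocks_def upk_def lol_def)
qed

lemma label_word_involution: "label_word l k (\<lambda>x. f (flip_pt x)) = rev (label_word k l f)"
  by (simp add: label_word_def)

lemma rotUL_LU: "rotUL_pt (rotLU_pt x) = x"
  by (cases x rule: rotLU_pt.cases) auto
lemma rotLU_UL: "rotLU_pt (rotUL_pt x) = x"
  by (cases x rule: rotUL_pt.cases) auto

lemma rotUL_img: "rotUL_pt ` points (Suc k) l = points k (Suc l)"
proof (rule image_eq_inverseI[of _ _ _ rotLU_pt])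
  show "x \<in> points (Suc k) l \<Longrightarrow> rotUL_pt x \<in> points k (Suc l)" for x
    by (cases x rule: rotUL_pt.cases) auto
  show "z \<in> points k (Suc l) \<Longrightarrow> rotLU_pt z \<in> points (Suc k) l" for z
    by (cases z rule: rotLU_pt.cases) auto
qed (rule rotUL_LU)

lemma rotLU_img: "rotLU_pt ` points k (Suc l) = points (Suc k) l"
proof (rule image_eq_inverseI[of _ _ _ rotUL_pt])
  show "z \<in> points k (Suc l) \<Longrightarrow> rotLU_pt z \<in> points (Suc k) l" for z
    by (cases z rule: rotLU_pt.cases) auto
  show "x \<in> points (Suc k) l \<Longrightarrow> rotUL_pt x \<in> points k (Suc l)" for x
    by (cases x rule: rotUL_pt.cases) auto
qed (rule rotLU_UL)

lemma rot_left_down_fibre_part: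
  "rot_left_down (fibre_part (Suc k) l f) = fibre_part k (Suc l) (\<lambda>x. f (rotLU_pt x))"
  unfolding rot_left_down_def
    using map_blocks_fibre_part[OF rotUL_img, where g'=rotLU_pt and f=f] rotLU_UL rotUL_LU
  by (simp add: fibre_part_def blocks_def upk_def lol_def)

lemma rot_left_up_fibre_part:
  "rot_left_up (fibre_part k (Suc l) f) = fibre_part (Suc k) l (\<lambda>x. f (rotUL_pt x))"
  unfolding rot_left_up_def
    using map_blocks_fibre_part[OF rotLU_img, where g'=rotUL_pt and f=f] rotLU_UL rotUL_LU
  by (simp add: fibre_part_def blocks_def upk_def lol_def)

lemma label_word_rot_left_down:
  "label_word (Suc k) l f = a # r \<Longrightarrow> label_word k (Suc l) (\<lambda>x. f (rotLU_pt x)) = r @ [a]"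
  by (auto simp: label_word_def map_upt_Suc simp del: upt_Suc)

lemma label_word_rot_left_up:
  "label_word k (Suc l) f = r @ [a] \<Longrightarrow> label_word (Suc k) l (\<lambda>x. f (rotUL_pt x)) = a # r"
  by (auto simp: label_word_def map_upt_Suc simp del: upt_Suc)

lemma rotUR_LR: "x \<in> points k (Suc l) \<Longrightarrow> rotUR_pt (Suc k) l (rotLR_pt k (Suc l) x) = x"
  by (cases x) auto
lemma rotLR_UR: "x \<in> points (Suc k) l \<Longrightarrow> rotLR_pt k (Suc l) (rotUR_pt (Suc k) l x) = x"
  by (cases x) auto

lemma rotUR_img: "rotUR_pt (Suc k) l ` points (Suc k) l = points k (Suc l)"
proof
  show "rotUR_pt (Suc k) l ` points (Suc k) l \<subseteq> points k (Suc l)"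
  proof
    fix z assume "z \<in> rotUR_pt (Suc k) l ` points (Suc k) l"
    then obtain x where x: "x \<in> points (Suc k) l" "z = rotUR_pt (Suc k) l x" by blast
    then show "z \<in> points k (Suc l)" by (cases x) auto
  qed
  show "points k (Suc l) \<subseteq> rotUR_pt (Suc k) l ` points (Suc k) l"
  proof
    fix z assume z: "z \<in> points k (Suc l)"
    have "rotLR_pt k (Suc l) z \<in> points (Suc k) l" using z by (cases z) auto
    then show "z \<in> rotUR_pt (Suc k) l ` points (Suc k) l" by (metis rotUR_LR[OF z] imageI)
  qed
qed

lemma rotLR_img: "rotLR_pt k (Suc l) ` points k (Suc l) = points (Suc k) l"
proof
  show "rotLR_pt k (Suc l) ` points k (Suc l) \<subseteq> points (Suc k) l"
  proof
    fix z assume "z \<in> rotLR_pt k (Suc l) ` points k (Suc l)"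
    then obtain x where x: "x \<in> points k (Suc l)" "z = rotLR_pt k (Suc l) x" by blast
    then show "z \<in> points (Suc k) l" by (cases x) auto
  qed
  show "points (Suc k) l \<subseteq> rotLR_pt k (Suc l) ` points k (Suc l)"
  proof
    fix z assume z: "z \<in> points (Suc k) l"
    have "rotUR_pt (Suc k) l z \<in> points k (Suc l)" using z by (cases z) auto
    then show "z \<in> rotLR_pt k (Suc l) ` points k (Suc l)" by (metis rotLR_UR[OF z] imageI)
  qed
qed

lemma rot_right_down_fibre_part:
  "rot_right_down (fibre_part (Suc k) l f) = fibre_part k (Suc l) (\<lambda>x. f (rotLR_pt k (Suc l) x))"
  unfolding rot_right_down_def
    using map_blocks_fibre_part[OF rotUR_img, where g'="rotLR_pt k (Suc l)" and f=f] rotLR_UR rotUR_LR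
  by (simp add: fibre_part_def blocks_def upk_def lol_def)

lemma rot_right_up_fibre_part:
  "rot_right_up (fibre_part k (Suc l) f) = fibre_part (Suc k) l (\<lambda>x. f (rotUR_pt (Suc k) l x))"
  unfolding rot_right_up_def
    using map_blocks_fibre_part[OF rotLR_img, where g'="rotUR_pt (Suc k) l" and f=f] rotLR_UR rotUR_LR
  by (simp add: fibre_part_def blocks_def upk_def lol_def)

lemma label_word_rot_right_down:
  "label_word k (Suc l) (\<lambda>x. f (rotLR_pt k (Suc l) x)) = label_word (Suc k) l f"
proof -
  have "map (\<lambda>j. f (rotLR_pt k (Suc l) (Lo j))) [0..<l] = map (\<lambda>j. f (Lo j)) [0..<l]" by simp
  then show ?thesis by (simp add: label_word_def)
qed

lemma label_word_rot_right_up: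
  "label_word (Suc k) l (\<lambda>x. f (rotUR_pt (Suc k) l x)) = label_word k (Suc l) f"
proof -
  have "map (\<lambda>j. f (rotUR_pt (Suc k) l (Up j))) [0..<k] = map (\<lambda>j. f (Up j)) [0..<k]" by simp
  then show ?thesis by (simp add: label_word_def)
qed


definition tensor_label ::
  "nat \<Rightarrow> nat \<Rightarrow> (pt \<Rightarrow> nat) \<Rightarrow> (pt \<Rightarrow> nat) \<Rightarrow> pt \<Rightarrow> nat" where
  "tensor_label k l f g x = (case x of Up i \<Rightarrow> if i < k then 2 * f (Up i) else Suc (2 * g (Up (i - k)))
                           | Lo j \<Rightarrow> if j < l then 2 * f (Lo j) else Suc (2 * g (Lo (j - l))))"

lemma tensor_fibre_part:
  "tensor (fibre_part k l f) (fibre_part k' l' g) = fibre_part (k + k') (l + l') (tensor_label k l f g)"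
proof -
  let ?P = "points (k + k') (l + l')" and ?A = "points k l" and ?B = "points k' l'"
  let ?s = "shift_pt k l"
  let ?h = "tensor_label k l f g"
  have PAB: "?P = ?A \<union> ?s ` ?B"
  proof
    show "?P \<subseteq> ?A \<union> ?s ` ?B"
    proof
      fix x assume x: "x \<in> ?P"
      show "x \<in> ?A \<union> ?s ` ?B"
      proof (cases x)
        case (Up i)
        show ?thesis
        proof (cases "i < k")
          case False
          then have "x = ?s (Up (i - k))" "Up (i - k) \<in> ?B" using Up x by auto
          then show ?thesis by blast
        qed (use Up in auto)
      next
        case (Lo i)
        show ?thesis
        proof (cases "i < l")
          case False
          then have "x = ?s (Lo (i - l))" "Lo (i - l) \<in> ?B" using Lo x by auto
          then show ?thesis by blast
        qed (use Lo in auto)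
      qed
    qed
    show "?A \<union> ?s ` ?B \<subseteq> ?P"
    proof
      fix x assume "x \<in> ?A \<union> ?s ` ?B"
      then show "x \<in> ?P"
      proof
        assume "x \<in> ?A" then show ?thesis by (cases x) auto
      next
        assume "x \<in> ?s ` ?B"
        then obtain y where "y \<in> ?B" "x = ?s y" by blast
        then show ?thesis by (cases y) auto
      qed
    qed
  qed
  have hA: "x \<in> ?A \<Longrightarrow> ?h x = 2 * f x" for x by (cases x) (auto simp: tensor_label_def)
  have hB: "?h (?s y) = Suc (2 * g y)" for y by (cases y) (auto simp: tensor_label_def)
  have sinj: "?s y = ?s z \<Longrightarrow> y = z" for y z by (cases y; cases z) auto
  have oe: "Suc (2 * a) \<noteq> 2 * b" for a b :: nat by presburger
  have clA: "{y \<in> ?P. ?h y = ?h x} = {y \<in> ?A. f y = f x}" if x: "x \<in> ?A" for x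
  proof -
    have yA: "y \<in> ?A" if yy: "y \<in> ?P" "?h y = ?h x" for y
    proof (rule ccontr)
      assume "y \<notin> ?A"
      then obtain z where "y = ?s z" using yy PAB by auto
      then have "?h y = Suc (2 * g z)" using hB by simp
      moreover have "?h x = 2 * f x" using hA[OF x] .
      ultimately show False using yy(2) oe by metis
    qed
    show ?thesis
    proof
      show "{y \<in> ?P. ?h y = ?h x} \<subseteq> {y \<in> ?A. f y = f x}" using yA hA x by fastforce
      show "{y \<in> ?A. f y = f x} \<subseteq> {y \<in> ?P. ?h y = ?h x}" using hA x PAB by auto
    qed
  qed
  have clB: "{y \<in> ?P. ?h y = ?h (?s x)} = ?s ` {y \<in> ?B. g y = g x}" for x
  proof
    show "{y \<in> ?P. ?h y = ?h (?s x)} \<subseteq> ?s ` {y \<in> ?B. g y = g x}"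
    proof
      fix y assume y: "y \<in> {y \<in> ?P. ?h y = ?h (?s x)}"
      have "y \<notin> ?A"
      proof
        assume "y \<in> ?A"
        then have "?h y = 2 * f y" by (rule hA)
        then have "2 * f y = Suc (2 * g x)" using y hB[of x] by simp
        then show False using oe[of "g x" "f y"] by simp
      qed
      then obtain z where "z \<in> ?B" "y = ?s z" using y PAB by auto
      then show "y \<in> ?s ` {y \<in> ?B. g y = g x}" using y hB by auto
    qed
    show "?s ` {y \<in> ?B. g y = g x} \<subseteq> {y \<in> ?P. ?h y = ?h (?s x)}"
      using PAB hB by auto
  qed
  have "blocks (fibre_part (k + k') (l + l') ?h) = (\<lambda>x. {y \<in> ?P. ?h y = ?h x}) ` ?A \<union> (\<lambda>x. {y \<in> ?P. ?h y = ?h x}) ` (?s ` ?B)"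
    unfolding blocks_fibre_part PAB[symmetric] using PAB by (simp add: image_Un)
  also have "\<dots> = blocks (fibre_part k l f) \<union> map_blocks ?s (blocks (fibre_part k' l' g))"
    unfolding blocks_fibre_part map_blocks_def image_image using clA clB
    by (auto intro!: arg_cong2[where f="(\<union>)"] image_cong)
  finally show ?thesis
    by (simp add: tensor_def fibre_part_def blocks_def upk_def lol_def)
qed

lemma label_word_tensor: "label_word (k + k') (l + l') (tensor_label k l f g) =
   map (\<lambda>c. 2 * c) (map (\<lambda>i. f (Up i)) [0..<k]) @ map (\<lambda>c. Suc (2 * c)) (label_word k' l' g)
   @ map (\<lambda>c. 2 * c) (rev (map (\<lambda>j. f (Lo j)) [0..<l]))"
proof -
  have u: "map (\<lambda>i. tensor_label k l f g (Up i)) [0..<k + k'] =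
     map (\<lambda>i. 2 * f (Up i)) [0..<k] @ map (\<lambda>i. Suc (2 * g (Up i))) [0..<k']"
    by (rule nth_equalityI) (auto simp: nth_append tensor_label_def)
  have d: "map (\<lambda>j. tensor_label k l f g (Lo j)) [0..<l + l'] =
     map (\<lambda>j. 2 * f (Lo j)) [0..<l] @ map (\<lambda>j. Suc (2 * g (Lo j))) [0..<l']"
    by (rule nth_equalityI) (auto simp: nth_append tensor_label_def)
  show ?thesis unfolding label_word_def u d by (simp add: rev_map)
qed

definition compose_rel :: "part \<Rightarrow> part \<Rightarrow> (pt3 \<times> pt3) set" where
  "compose_rel p q = (same_block_rel emb_upper (blocks p) \<union> same_block_rel emb_lower (blocks q))\<^sup>*"

fun pt3_code :: "pt3 \<Rightarrow> nat" where
  "pt3_code (Top i) = 3 * i"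
| "pt3_code (Mid i) = 3 * i + 1"
| "pt3_code (Bot i) = 3 * i + 2"

lemma pt3_code_inj: "pt3_code a = pt3_code b \<Longrightarrow> a = b"
  by (cases a; cases b; simp; presburger)

definition compose_label :: "part \<Rightarrow> part \<Rightarrow> pt3 \<Rightarrow> nat" where
  "compose_label p q z = (LEAST n. \<exists>z'. (z, z') \<in> compose_rel p q \<and> pt3_code z' = n)"

lemma sym_same_block_rel: "sym (same_block_rel e B)"
  unfolding sym_def same_block_rel_def by blast

lemma compose_rel_sym: "(a, b) \<in> compose_rel p q \<Longrightarrow> (b, a) \<in> compose_rel p q"
proof -
  have "sym (same_block_rel emb_upper (blocks p) \<union> same_block_rel emb_lower (blocks q))"
    using sym_same_block_rel sym_Un by blast
  then have "sym (compose_rel p q)" unfolding compose_rel_def by (rule sym_rtrancl)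
  then show "(a, b) \<in> compose_rel p q \<Longrightarrow> (b, a) \<in> compose_rel p q" by (meson symD)
qed

lemma compose_rel_trans:
  "(a, b) \<in> compose_rel p q \<Longrightarrow> (b, c) \<in> compose_rel p q \<Longrightarrow> (a, c) \<in> compose_rel p q"
  unfolding compose_rel_def by (rule rtrancl_trans)

lemma compose_rel_refl: "(a, a) \<in> compose_rel p q"
  unfolding compose_rel_def by simp

lemma compose_label_eq:
  "compose_label p q a = compose_label p q b \<longleftrightarrow> (a, b) \<in> compose_rel p q"
proof
  assume ab: "(a, b) \<in> compose_rel p q"
  have "(\<exists>z'. (a, z') \<in> compose_rel p q \<and> pt3_code z' = n) \<longleftrightarrow> (\<exists>z'. (b, z') \<in> compose_rel p q \<and> pt3_code z' = n)" for n
  proof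
    assume "\<exists>z'. (a, z') \<in> compose_rel p q \<and> pt3_code z' = n"
    then obtain z' where "(a, z') \<in> compose_rel p q" "pt3_code z' = n" by blast
    moreover then have "(b, z') \<in> compose_rel p q" using compose_rel_trans compose_rel_sym ab by blast
    ultimately show "\<exists>z'. (b, z') \<in> compose_rel p q \<and> pt3_code z' = n" by blast
  next
    assume "\<exists>z'. (b, z') \<in> compose_rel p q \<and> pt3_code z' = n"
    then obtain z' where "(b, z') \<in> compose_rel p q" "pt3_code z' = n" by blast
    moreover then have "(a, z') \<in> compose_rel p q" using compose_rel_trans ab by blast
    ultimately show "\<exists>z'. (a, z') \<in> compose_rel p q \<and> pt3_code z' = n" by blast
  qed
  then show "compose_label p q a = compose_label p q b" unfolding compose_label_def by simp
next
  assume e: "compose_label p q a = compose_label p q b"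
  have ex: "\<exists>n z'. (z, z') \<in> compose_rel p q \<and> pt3_code z' = n" for z using compose_rel_refl
    by blast
  obtain za where za: "(a, za) \<in> compose_rel p q" "pt3_code za = compose_label p q a"
    using LeastI_ex[OF ex[of a]] unfolding compose_label_def by blast
  obtain zb where zb: "(b, zb) \<in> compose_rel p q" "pt3_code zb = compose_label p q b"
    using LeastI_ex[OF ex[of b]] unfolding compose_label_def by blast
  have "za = zb" using za zb e pt3_code_inj by simp
  then show "(a, b) \<in> compose_rel p q" using za zb compose_rel_sym compose_rel_trans by blast
qed

lemma compose_fibre_part:
  "compose p q = fibre_part (upk p) (lol q) (\<lambda>x. compose_label p q (emb_res x))"
proof -
  have "{y \<in> points (upk p) (lol q). (emb_res x, emb_res y) \<in> compose_rel p q} =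
        {y \<in> points (upk p) (lol q). compose_label p q (emb_res y) = compose_label p q (emb_res x)}" for x
  proof (rule Collect_cong)
    fix y
    have "(emb_res x, emb_res y) \<in> compose_rel p q \<longleftrightarrow> compose_label p q (emb_res y) = compose_label p q (emb_res x)"
      unfolding compose_label_eq using compose_rel_sym by metis
    then show "(y \<in> points (upk p) (lol q) \<and> (emb_res x, emb_res y) \<in> compose_rel p q) =
          (y \<in> points (upk p) (lol q) \<and> compose_label p q (emb_res y) = compose_label p q (emb_res x))" by simp
  qed
  then show ?thesis
    unfolding compose_def fibre_part_def Let_def compose_rel_def[symmetric] by simp
qed

lemma same_block_rel_fibre_part: "same_block_rel e (blocks (fibre_part k l f)) =
   {(e x, e y) | x y. x \<in> points k l \<and> y \<in> points k l \<and> f x = f y}"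
proof
  show "same_block_rel e (blocks (fibre_part k l f)) \<subseteq> {(e x, e y) | x y. x \<in> points k l \<and> y \<in> points k l \<and> f x = f y}"
  proof
    fix z assume "z \<in> same_block_rel e (blocks (fibre_part k l f))"
    then obtain x y b where "z = (e x, e y)" "b \<in> blocks (fibre_part k l f)" "x \<in> b" "y \<in> b"
      unfolding same_block_rel_def by blast
    then have "x \<in> points k l \<and> y \<in> points k l \<and> f x = f y" unfolding blocks_fibre_part
      by (auto simp del: Up_points Lo_points)
    then show "z \<in> {(e x, e y) | x y. x \<in> points k l \<and> y \<in> points k l \<and> f x = f y}"
      using \<open>z = (e x, e y)\<close> by blast
  qed
  show "{(e x, e y) | x y. x \<in> points k l \<and> y \<in> points k l \<and> f x = f y} \<subseteq> same_block_rel e (blocks (fibre_part k l f))"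
  proof
    fix z assume "z \<in> {(e x, e y) | x y. x \<in> points k l \<and> y \<in> points k l \<and> f x = f y}"
    then obtain x y where xy: "z = (e x, e y)" "x \<in> points k l" "y \<in> points k l" "f x = f y" by blast
    then have "{w \<in> points k l. f w = f x} \<in> blocks (fibre_part k l f)" unfolding blocks_fibre_part
      by blast
    moreover have "x \<in> {w \<in> points k l. f w = f x}" "y \<in> {w \<in> points k l. f w = f x}" using xy
      by auto
    ultimately have "\<exists>b\<in>blocks (fibre_part k l f). x \<in> b \<and> y \<in> b"
      by (intro bexI[of _ "{w \<in> points k l. f w = f x}"] conjI)
    then show "z \<in> same_block_rel e (blocks (fibre_part k l f))" unfolding same_block_rel_def xy(1)
      by (intro CollectI exI[of _ x] exI[of _ y]) simp
  qed
qed

lemma compose_rel_upperI: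
  "x \<in> points k l \<Longrightarrow> y \<in> points k l \<Longrightarrow> f x = f y \<Longrightarrow>
     (emb_upper x, emb_upper y) \<in> compose_rel (fibre_part k l f) q"
  unfolding compose_rel_def same_block_rel_fibre_part by (intro r_into_rtrancl UnI1) blast

lemma compose_rel_lowerI:
  "x \<in> points l m \<Longrightarrow> y \<in> points l m \<Longrightarrow> g x = g y \<Longrightarrow>
     (emb_lower x, emb_lower y) \<in> compose_rel p (fibre_part l m g)"
  unfolding compose_rel_def same_block_rel_fibre_part by (intro r_into_rtrancl UnI2) blast

lemma compose_rel_invariant:
  assumes "(a, b) \<in> compose_rel (fibre_part k l f) (fibre_part l m g)"
    and "\<And>x y. x \<in> points k l \<Longrightarrow> y \<in> points k l \<Longrightarrow> f x = f y \<Longrightarrow> c (emb_upper x) = c (emb_upper y)"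
    and "\<And>x y. x \<in> points l m \<Longrightarrow> y \<in> points l m \<Longrightarrow> g x = g y \<Longrightarrow> c (emb_lower x) = c (emb_lower y)"
  shows "c a = c b"
  using assms(1) unfolding compose_rel_def
proof (induction rule: rtrancl_induct)
  case (step y z)
  then show ?case using assms(2,3) unfolding same_block_rel_fibre_part by auto
qed simp

lemma compose_eq_fibre_part:
  assumes "\<And>x y. x \<in> points k m \<Longrightarrow> y \<in> points k m \<Longrightarrow>
      (emb_res x, emb_res y) \<in> compose_rel p q \<longleftrightarrow> h x = h y"
    and "upk p = k" and "lol q = m"
  shows "compose p q = fibre_part k m h"
  unfolding compose_fibre_part assms(2,3) by (rule fibre_part_cong) (simp add: compose_label_eq assms(1))



lemma points_0_2: "points 0 2 = {Lo 0, Lo 1}"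
  by (auto simp: points_def lessThan_def less_Suc_eq numeral_2_eq_2)
lemma points_1_1: "points 1 1 = {Up 0, Lo 0}"
  by (auto simp: points_def)
lemma points_0_4: "points 0 4 = {Lo 0, Lo 1, Lo 2, Lo 3}"
  by (auto simp: points_def lessThan_def less_Suc_eq numeral_eq_Suc)
lemma points_3_3: "points 3 3 = {Up 0, Up 1, Up 2, Lo 0, Lo 1, Lo 2}"
  by (auto simp: points_def lessThan_def less_Suc_eq numeral_eq_Suc)

lemma fibre_part_const:
  "points k l \<noteq> {} \<Longrightarrow> fibre_part k l (\<lambda>_. c) = (k, l, {points k l})"
  by (auto simp: fibre_part_def)

lemma pair_part_fibre_part: "pair_part = fibre_part 0 2 (\<lambda>_. c)"
  by (simp add: fibre_part_const points_0_2 pair_part_def)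
lemma id_part_fibre_part: "id_part = fibre_part 1 1 (\<lambda>_. c)"
proof -
  have "Up 0 \<in> points 1 1" by simp
  then have "points 1 1 \<noteq> {}" by blast
  then show ?thesis
    unfolding id_part_def fibre_part_const[of 1 1 c, OF \<open>points 1 1 \<noteq> {}\<close>] points_1_1
      by simp
qed
lemma four_block_fibre_part: "four_block = fibre_part 0 4 (\<lambda>_. c)"
  by (simp add: fibre_part_const points_0_4 four_block_def)

definition positioner_label :: "pt \<Rightarrow> nat" where
  "positioner_label x = (case x of Up i \<Rightarrow> if i = 2 then 1 else 0 | Lo j \<Rightarrow> if j = 0 then 1 else 0)"

lemma pair_positioner_fibre_part: "pair_positioner = fibre_part 3 3 positioner_label"
proof -
  have "(\<lambda>x. {y \<in> points 3 3. positioner_label y = positioner_label x}) ` points 3 3 = {{Up 0, Up 1, Lo 1, Lo 2}, {Up 2, Lo 0}}"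
    unfolding points_3_3 by (auto simp: positioner_label_def)
  then show ?thesis by (simp add: fibre_part_def pair_positioner_def)
qed

definition double_singleton_label ::
  "pt \<Rightarrow> nat" where "double_singleton_label x = (case x of Lo j \<Rightarrow> j | Up i \<Rightarrow> 0)"

lemma double_singleton_fibre_part: "double_singleton = fibre_part 0 2 double_singleton_label"
proof -
  have "(\<lambda>x. {y \<in> points 0 2. double_singleton_label y = double_singleton_label x}) ` points 0 2 = {{Lo 0}, {Lo 1}}"
    unfolding points_0_2 by (auto simp: double_singleton_label_def)
  then show ?thesis by (simp add: fibre_part_def double_singleton_def)
qed


section \<open>The words of a category of partitions\<close>

definition identity_label ::
  "pt \<Rightarrow> nat" where "identity_label x = (case x of Up i \<Rightarrow> i | Lo j \<Rightarrow> j)"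

locale partition_category =
  fixes C :: "part set"
  assumes category: "category_of_partitions C"
begin

lemma
  shows C_Parts: "C \<subseteq> Parts" and C_pair: "pair_part \<in> C" and C_id: "id_part \<in> C"
    and C_tensor: "p \<in> C \<Longrightarrow> q \<in> C \<Longrightarrow> tensor p q \<in> C"
    and C_compose: "p \<in> C \<Longrightarrow> q \<in> C \<Longrightarrow> lol p = upk q \<Longrightarrow> compose p q \<in> C"
    and C_involution: "p \<in> C \<Longrightarrow> involution p \<in> C"
    and C_rot_left_down: "p \<in> C \<Longrightarrow> 0 < upk p \<Longrightarrow> rot_left_down p \<in> C"
    and C_rot_right_down: "p \<in> C \<Longrightarrow> 0 < upk p \<Longrightarrow> rot_right_down p \<in> C"
    and C_rot_left_up: "p \<in> C \<Longrightarrow> 0 < lol p \<Longrightarrow> rot_left_up p \<in> C"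
    and C_rot_right_up: "p \<in> C \<Longrightarrow> 0 < lol p \<Longrightarrow> rot_right_up p \<in> C"
  using category by (simp_all add: category_of_partitions_def)

definition words :: "nat list set" where "words = {xs. word_part xs \<in> C}"

lemma fibre_part_in_iff: "fibre_part k l f \<in> C \<longleftrightarrow> label_word k l f \<in> words"
proof (induction l arbitrary: k f)
  case 0
  have "fibre_part k 0 f = fibre_part k 0 (word_label k (label_word k 0 f))"
    by (rule fibre_part_cong) (auto simp: word_label_def label_word_def points_def)
  then have "fibre_part k 0 f = word_part (label_word k 0 f)" by (simp add: word_part_def)
  then show ?case by (simp add: words_def)
next
  case (Suc l)
  let ?g = "\<lambda>x. f (rotUR_pt (Suc k) l x)"
  have "fibre_part k (Suc l) f \<in> C \<longleftrightarrow> fibre_part (Suc k) l ?g \<in> C"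
  proof
    assume "fibre_part k (Suc l) f \<in> C"
    then show "fibre_part (Suc k) l ?g \<in> C" using C_rot_right_up[of "fibre_part k (Suc l) f"]
      by (simp add: rot_right_up_fibre_part)
  next
    assume "fibre_part (Suc k) l ?g \<in> C"
    then have "rot_right_down (fibre_part (Suc k) l ?g) \<in> C" using C_rot_right_down by simp
    moreover have "rot_right_down (fibre_part (Suc k) l ?g) = fibre_part k (Suc l) f"
      unfolding rot_right_down_fibre_part by (rule fibre_part_cong) (simp add: rotUR_LR)
    ultimately show "fibre_part k (Suc l) f \<in> C" by simp
  qed
  also have "\<dots> \<longleftrightarrow> label_word (Suc k) l ?g \<in> words" by (rule Suc.IH)
  finally show ?case by (simp add: label_word_rot_right_up)
qed

lemma in_words_iff_fibre_part:
  "xs \<in> words \<longleftrightarrow> fibre_part k (length xs - k) (word_label k xs) \<in> C" if "k \<le> length xs"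
  using fibre_part_in_iff label_word_word_label[OF that] by simp

lemma words_rotate_first: "a # xs \<in> words \<Longrightarrow> xs @ [a] \<in> words"
proof -
  assume "a # xs \<in> words"
  then have "fibre_part 1 (length xs) (word_label 1 (a # xs)) \<in> C"
    using in_words_iff_fibre_part[of 1 "a # xs"] by simp
  then have "rot_left_down (fibre_part (Suc 0) (length xs) (word_label 1 (a # xs))) \<in> C"
    using C_rot_left_down by simp
  then have "fibre_part 0 (Suc (length xs)) (\<lambda>x. word_label 1 (a # xs) (rotLU_pt x)) \<in> C"
    by (simp add: rot_left_down_fibre_part)
  moreover have "label_word (Suc 0) (length xs) (word_label 1 (a # xs)) = a # xs"
    using label_word_word_label[of 1 "a # xs"] by simp
  ultimately show "xs @ [a] \<in> words" using fibre_part_in_iff label_word_rot_left_down by fastforce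
qed

lemma words_rotate: "u @ v \<in> words \<Longrightarrow> v @ u \<in> words"
proof (induction u arbitrary: v)
  case Nil then show ?case by simp
next
  case (Cons a u)
  have "u @ v @ [a] \<in> words" using words_rotate_first[of a "u @ v"] Cons.prems by simp
  then have "(v @ [a]) @ u \<in> words" using Cons.IH[of "v @ [a]"] by simp
  then show ?case by simp
qed

lemma words_rev: "xs \<in> words \<Longrightarrow> rev xs \<in> words"
proof -
  assume "xs \<in> words"
  then have "fibre_part 0 (length xs) (word_label 0 xs) \<in> C" using in_words_iff_fibre_part[of 0 xs]
    by simp
  then have "involution (fibre_part 0 (length xs) (word_label 0 xs)) \<in> C" by (rule C_involution)
  then have "fibre_part (length xs) 0 (\<lambda>x. word_label 0 xs (flip_pt x)) \<in> C"
    by (simp add: involution_fibre_part)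
  then show "rev xs \<in> words" using fibre_part_in_iff label_word_involution label_word_word_label[of 0 xs]
    by simp
qed

lemma words_tensor:
  "xs \<in> words \<Longrightarrow> ys \<in> words \<Longrightarrow> map (\<lambda>c. Suc (2 * c)) ys @ map (\<lambda>c. 2 * c) xs \<in> words"
proof -
  assume "xs \<in> words" "ys \<in> words"
  then have "fibre_part 0 (length xs) (word_label 0 xs) \<in> C" "fibre_part 0 (length ys) (word_label 0 ys) \<in> C"
    using in_words_iff_fibre_part[of 0] by auto
  then have "tensor (fibre_part 0 (length xs) (word_label 0 xs)) (fibre_part 0 (length ys) (word_label 0 ys)) \<in> C" by (rule C_tensor)
  then have "fibre_part (0 + 0) (length xs + length ys) (tensor_label 0 (length xs) (word_label 0 xs) (word_label 0 ys)) \<in> C"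
    by (simp add: tensor_fibre_part)
  then have "label_word (0 + 0) (length xs + length ys) (tensor_label 0 (length xs) (word_label 0 xs) (word_label 0 ys)) \<in> words"
    using fibre_part_in_iff by blast
  moreover have "rev (map (\<lambda>j. word_label 0 xs (Lo j)) [0..<length xs]) = xs"
    using label_word_word_label[of 0 xs] by (simp add: label_word_def)
  moreover have "label_word (0 + 0) (length xs + length ys) (tensor_label 0 (length xs) (word_label 0 xs) (word_label 0 ys)) =
     map (\<lambda>c. Suc (2 * c)) ys @ map (\<lambda>c. 2 * c) (rev (map (\<lambda>j. word_label 0 xs (Lo j)) [0..<length xs]))"
    using label_word_tensor[of 0 0 "length xs" "length ys" "word_label 0 xs" "word_label 0 ys"] label_word_word_label[of 0 ys] by simp
  ultimately show ?thesis by simp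
qed

lemma words_map_inj:
  "xs \<in> words \<Longrightarrow> inj_on h (set xs) \<Longrightarrow> map h xs \<in> words"
proof -
  assume xs: "xs \<in> words" and inj: "inj_on h (set xs)"
  have "fibre_part 0 (length xs) (word_label 0 xs) \<in> C" using xs in_words_iff_fibre_part[of 0 xs] by simp
  moreover have "fibre_part 0 (length xs) (word_label 0 xs) = fibre_part 0 (length xs) (\<lambda>x. h (word_label 0 xs x))"
  proof (rule fibre_part_cong)
    fix x y assume "x \<in> points 0 (length xs)" "y \<in> points 0 (length xs)"
    then have "word_label 0 xs x \<in> set xs" "word_label 0 xs y \<in> set xs"
      by (auto simp: word_label_def points_def)
    then show "word_label 0 xs x = word_label 0 xs y \<longleftrightarrow> h (word_label 0 xs x) = h (word_label 0 xs y)" using inj by (auto dest: inj_onD)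
  qed
  ultimately have "label_word 0 (length xs) (\<lambda>x. h (word_label 0 xs x)) \<in> words"
    using fibre_part_in_iff by simp
  then show ?thesis using label_word_comp[of 0 "length xs" h "word_label 0 xs"] label_word_word_label[of 0 xs]
    by simp
qed

lemma words_pair: "[c, c] \<in> words"
  using C_pair fibre_part_in_iff[of 0 2 "\<lambda>_. c"]
    by (simp add: pair_part_fibre_part[of c] label_word_def numeral_2_eq_2)

lemma identity_part_in: "fibre_part k k identity_label \<in> C"
proof (induction k)
  case 0
  have inv: "involution pair_part = fibre_part 2 0 (\<lambda>x. 0)"
    unfolding pair_part_fibre_part[of 0] involution_fibre_part by simp
  have "compose pair_part (involution pair_part) \<in> C"
    using C_compose[OF C_pair C_involution[OF C_pair]] inv by (simp add: pair_part_def lol_def)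
  moreover have "compose pair_part (involution pair_part) = fibre_part 0 0 identity_label"
  proof -
    have "upk pair_part = 0" "lol (involution pair_part) = 0"
      by (simp_all add: pair_part_def upk_def lol_def involution_def)
    then have "compose pair_part (involution pair_part) = fibre_part 0 0 (\<lambda>x. compose_label pair_part (involution pair_part) (emb_res x))"
      by (simp add: compose_fibre_part)
    also have "\<dots> = fibre_part 0 0 identity_label" by (rule fibre_part_cong) (simp add: points_def)
    finally show ?thesis .
  qed
  ultimately show ?case by simp
next
  case (Suc k)
  have "tensor (fibre_part k k identity_label) (fibre_part 1 1 (\<lambda>_. 0)) \<in> C"
    using C_tensor[OF Suc C_id] by (simp add: id_part_fibre_part[of 0])
  moreover have "tensor (fibre_part k k identity_label) (fibre_part 1 1 (\<lambda>_. 0)) = fibre_part (Suc k) (Suc k) identity_label"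
  proof -
    have "fibre_part (k + 1) (k + 1) (tensor_label k k identity_label (\<lambda>_. 0)) = fibre_part (k + 1) (k + 1) identity_label"
    proof (rule fibre_part_cong)
      have tv: "tensor_label k k identity_label (\<lambda>_. 0) z = (if identity_label z < k then 2 * identity_label z else 1) \<and> identity_label z \<le> k"
        if "z \<in> points (k + 1) (k + 1)" for z
        using that by (cases z) (auto simp: tensor_label_def identity_label_def)
      fix x y assume "x \<in> points (k + 1) (k + 1)" "y \<in> points (k + 1) (k + 1)"
      then show "tensor_label k k identity_label (\<lambda>_. 0) x = tensor_label k k identity_label (\<lambda>_. 0) y \<longleftrightarrow> identity_label x = identity_label y"
        using tv[of x] tv[of y] by (auto split: if_splits)
    qed
    then show ?thesis by (simp add: tensor_fibre_part)
  qed
  ultimately show ?case by simp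
qed

end

definition replace_label ::
  "nat list \<Rightarrow> (nat \<Rightarrow> nat) \<Rightarrow> nat list \<Rightarrow> pt \<Rightarrow> nat" where
  "replace_label w' f w x = (case x of Up i \<Rightarrow> w' ! i | Lo j \<Rightarrow> f (w ! j))"

text \<open>Composing X \<otimes> id \<otimes> ... \<otimes> id (k identities), where X has labels fX, on top of the
  one-row partition of the word w @ v (with length w = s and length v = k) turns it into
  w' @ map f v, provided the blocks of X identify exactly what w' and f require.\<close>

locale prefix_replacement =
  fixes t s :: nat and fX :: "pt \<Rightarrow> nat" and w w' v :: "nat list" and f :: "nat \<Rightarrow> nat"
  assumes length_w: "length w = s" and length_w': "length w' = t"
    and replace_label_respects: "\<And>x y. x \<in> points t s \<Longrightarrow> y \<in> points t s \<Longrightarrow> fX x = fX y \<Longrightarrow>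
           replace_label w' f w x = replace_label w' f w y"
    and upper_meets_lower: "\<And>i. i < t \<Longrightarrow> \<exists>j<s. fX (Up i) = fX (Lo j)"
    and merged_letters_in_prefix: "\<And>c d. c \<in> set (w @ v) \<Longrightarrow> d \<in> set (w @ v) \<Longrightarrow> c \<noteq> d \<Longrightarrow>
           f c = f d \<Longrightarrow> \<exists>j1<s. \<exists>j2<s. w ! j1 = c \<and> w ! j2 = d \<and> fX (Lo j1) = fX (Lo j2)"
begin

definition top_label :: "pt \<Rightarrow> nat" where
  "top_label = tensor_label t s fX identity_label"

definition top_part :: part where
  "top_part = fibre_part (t + length v) (s + length v) top_label"

definition offset :: "pt \<Rightarrow> nat" where
  "offset x = (case x of Up i \<Rightarrow> i - t | Lo j \<Rightarrow> j - s)"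

definition value_label :: "pt3 \<Rightarrow> nat" where
  "value_label z = (case z of Top i \<Rightarrow> (w' @ map f v) ! i | Mid j \<Rightarrow> f ((w @ v) ! j) | Bot _ \<Rightarrow> 0)"

lemma top_label_eq:
  "x \<in> points (t + length v) (s + length v) \<Longrightarrow>
     top_label x = (if x \<in> points t s then 2 * fX x else Suc (2 * offset x))"
  by (cases x) (auto simp: top_label_def tensor_label_def offset_def identity_label_def)

lemma value_label_emb_upper:
  "x \<in> points (t + length v) (s + length v) \<Longrightarrow>
     value_label (emb_upper x) = (if x \<in> points t s then replace_label w' f w x else f (v ! offset x))"
  using length_w length_w'
  by (cases x) (auto simp: value_label_def replace_label_def offset_def nth_append)

lemma value_label_respects_top_label:
  assumes x: "x \<in> points (t + length v) (s + length v)" and y: "y \<in> points (t + length v) (s + length v)"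
    and xy: "top_label x = top_label y"
  shows "value_label (emb_upper x) = value_label (emb_upper y)"
proof -
  have parity: "even (top_label z) \<longleftrightarrow> z \<in> points t s"
    if "z \<in> points (t + length v) (s + length v)" for z
    using top_label_eq[OF that] by simp
  have "x \<in> points t s \<longleftrightarrow> y \<in> points t s" using parity[OF x] parity[OF y] xy
    by simp
  then consider "x \<in> points t s" "y \<in> points t s" | "x \<notin> points t s" "y \<notin> points t s"
    by blast
  then show ?thesis
  proof cases
    case 1
    then have "fX x = fX y" using xy top_label_eq[OF x] top_label_eq[OF y] by simp
    then have "replace_label w' f w x = replace_label w' f w y"
      using replace_label_respects 1 by blast
    then show ?thesis using 1 value_label_emb_upper[OF x] value_label_emb_upper[OF y] by simp
  next
    case 2
    then have "offset x = offset y" using xy top_label_eq[OF x] top_label_eq[OF y] by simp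
    then show ?thesis using 2 value_label_emb_upper[OF x] value_label_emb_upper[OF y] by simp
  qed
qed

lemma value_label_compose_rel:
  assumes "(a, b) \<in> compose_rel top_part (word_part (w @ v))"
  shows "value_label a = value_label b"
proof -
  have "(a, b) \<in> compose_rel (fibre_part (t + length v) (s + length v) top_label)
      (fibre_part (s + length v) 0 (word_label (s + length v) (w @ v)))"
    using assms length_w by (simp add: top_part_def word_part_def)
  then show ?thesis
  proof (rule compose_rel_invariant)
    fix x y assume "x \<in> points (s + length v) 0" "y \<in> points (s + length v) 0"
      "word_label (s + length v) (w @ v) x = word_label (s + length v) (w @ v) y"
    then show "value_label (emb_lower x) = value_label (emb_lower y)"
      by (cases x; cases y) (auto simp: value_label_def word_label_def)
  qed (auto intro: value_label_respects_top_label)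
qed

lemma Mid_compose_rel_Mid_if_same_letter:
  "j < s + length v \<Longrightarrow> j' < s + length v \<Longrightarrow> (w @ v) ! j = (w @ v) ! j' \<Longrightarrow>
     (Mid j, Mid j') \<in> compose_rel top_part (word_part (w @ v))"
  using compose_rel_lowerI[of "Up j" "length (w @ v)" 0 "Up j'" "word_label (length (w @ v)) (w @ v)" top_part]
    length_w by (simp add: word_part_def word_label_def)

lemma Top_compose_rel_Mid:
  assumes i: "i < t + length v"
  shows "\<exists>j<s + length v. (Top i, Mid j) \<in> compose_rel top_part (word_part (w @ v))"
proof (cases "i < t")
  case True
  then obtain j where j: "j < s" "fX (Up i) = fX (Lo j)" using upper_meets_lower by blast
  then have "top_label (Up i) = top_label (Lo j)" using top_label_eq[of "Up i"] top_label_eq[of "Lo j"] True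
    by simp
  then have "(Top i, Mid j) \<in> compose_rel top_part (word_part (w @ v))"
    using compose_rel_upperI[of "Up i" "t + length v" "s + length v" "Lo j"] j True
    by (simp add: top_part_def)
  then show ?thesis using j(1) by (intro exI[of _ j]) auto
next
  case False
  let ?j = "s + (i - t)"
  have "top_label (Up i) = top_label (Lo ?j)"
    using top_label_eq[of "Up i"] top_label_eq[of "Lo ?j"] False i by (simp add: offset_def)
  then have "(Top i, Mid ?j) \<in> compose_rel top_part (word_part (w @ v))"
    using compose_rel_upperI[of "Up i" "t + length v" "s + length v" "Lo ?j"] False i
    by (simp add: top_part_def)
  then show ?thesis using False i by (intro exI[of _ ?j]) auto
qed

lemma Mid_compose_rel_Mid:
  assumes jj: "j < s + length v" "j' < s + length v" and f_eq: "f ((w @ v) ! j) = f ((w @ v) ! j')"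
  shows "(Mid j, Mid j') \<in> compose_rel top_part (word_part (w @ v))"
proof (cases "(w @ v) ! j = (w @ v) ! j'")
  case True then show ?thesis using Mid_compose_rel_Mid_if_same_letter jj by simp
next
  case False
  have "(w @ v) ! j \<in> set (w @ v)" "(w @ v) ! j' \<in> set (w @ v)"
    using jj length_w by (metis length_append nth_mem)+
  then obtain j1 j2 where j12: "j1 < s" "j2 < s" "w ! j1 = (w @ v) ! j" "w ! j2 = (w @ v) ! j'"
      "fX (Lo j1) = fX (Lo j2)"
    using merged_letters_in_prefix False f_eq by blast
  have prefix: "(w @ v) ! j1 = w ! j1" "(w @ v) ! j2 = w ! j2" using j12 length_w by (auto simp: nth_append)
  have "top_label (Lo j1) = top_label (Lo j2)" using top_label_eq[of "Lo j1"] top_label_eq[of "Lo j2"] j12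
    by simp
  then have "(Mid j1, Mid j2) \<in> compose_rel top_part (word_part (w @ v))"
    using compose_rel_upperI[of "Lo j1" "t + length v" "s + length v" "Lo j2"] j12
    by (simp add: top_part_def)
  moreover have "(Mid j, Mid j1) \<in> compose_rel top_part (word_part (w @ v))"
    "(Mid j2, Mid j') \<in> compose_rel top_part (word_part (w @ v))"
    using Mid_compose_rel_Mid_if_same_letter jj j12 prefix by auto
  ultimately show ?thesis using compose_rel_trans by blast
qed

lemma Top_compose_rel_Top_iff:
  assumes ii: "i < t + length v" "i' < t + length v"
  shows "(Top i, Top i') \<in> compose_rel top_part (word_part (w @ v)) \<longleftrightarrow>
    (w' @ map f v) ! i = (w' @ map f v) ! i'"
proof
  assume "(Top i, Top i') \<in> compose_rel top_part (word_part (w @ v))"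
  then show "(w' @ map f v) ! i = (w' @ map f v) ! i'"
    using value_label_compose_rel by (force simp: value_label_def)
next
  assume eq: "(w' @ map f v) ! i = (w' @ map f v) ! i'"
  obtain j j' where j: "j < s + length v" "(Top i, Mid j) \<in> compose_rel top_part (word_part (w @ v))"
    and j': "j' < s + length v" "(Top i', Mid j') \<in> compose_rel top_part (word_part (w @ v))"
    using Top_compose_rel_Mid ii by meson
  have "f ((w @ v) ! j) = f ((w @ v) ! j')"
    using value_label_compose_rel[OF j(2)] value_label_compose_rel[OF j'(2)] eq
    by (simp add: value_label_def)
  then have "(Mid j, Mid j') \<in> compose_rel top_part (word_part (w @ v))"
    using Mid_compose_rel_Mid j j' by simp
  then show "(Top i, Top i') \<in> compose_rel top_part (word_part (w @ v))"
    using j j' compose_rel_trans compose_rel_sym by meson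
qed

lemma compose_top_part_word_part: "compose top_part (word_part (w @ v)) = word_part (w' @ map f v)"
proof -
  have "compose top_part (word_part (w @ v)) = fibre_part (t + length v) 0 (word_label (t + length v) (w' @ map f v))"
  proof (rule compose_eq_fibre_part)
    fix x y assume "x \<in> points (t + length v) 0" "y \<in> points (t + length v) 0"
    then obtain i i' where "x = Up i" "y = Up i'" "i < t + length v" "i' < t + length v"
      by (auto simp: points_def)
    then show "(emb_res x, emb_res y) \<in> compose_rel top_part (word_part (w @ v)) \<longleftrightarrow>
        word_label (t + length v) (w' @ map f v) x = word_label (t + length v) (w' @ map f v) y"
      using Top_compose_rel_Top_iff by (simp add: word_label_def)
  qed (simp_all add: top_part_def word_part_def length_w)
  then show ?thesis using length_w' by (simp add: word_part_def)
qed

end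

lemma (in partition_category) replace_prefix:
  assumes "fibre_part t s fX \<in> C" and "w @ v \<in> words" and "prefix_replacement t s fX w w' v f"
  shows "w' @ map f v \<in> words"
proof -
  interpret prefix_replacement t s fX w w' v f by fact
  have "top_part \<in> C"
    using C_tensor[OF assms(1) identity_part_in[of "length v"]]
    by (simp add: top_part_def top_label_def tensor_fibre_part)
  moreover have "word_part (w @ v) \<in> C" using assms(2) by (simp add: words_def)
  ultimately have "compose top_part (word_part (w @ v)) \<in> C"
    by (intro C_compose) (simp_all add: top_part_def word_part_def length_w)
  then show ?thesis by (simp add: compose_top_part_word_part words_def)
qed


section \<open>From categories to subgroups\<close>

locale simplifiable_category = partition_category +
  assumes four_block_in: "four_block \<in> C" and pair_positioner_in: "pair_positioner \<in> C"
begin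

lemma const_part_rot_left_up:
  "fibre_part k (Suc l) (\<lambda>_. 0) \<in> C \<Longrightarrow> fibre_part (Suc k) l (\<lambda>_. 0) \<in> C"
  using C_rot_left_up[of "fibre_part k (Suc l) (\<lambda>_. 0)"] by (simp add: rot_left_up_fibre_part)

lemma const_part_0_4: "fibre_part 0 (Suc (Suc (Suc (Suc 0)))) (\<lambda>_. 0) \<in> C"
  using four_block_in four_block_fibre_part[of 0] by (simp add: numeral_eq_Suc)

lemma const_part_3_1: "fibre_part 3 1 (\<lambda>_. 0) \<in> C"
  using const_part_rot_left_up[OF const_part_rot_left_up[OF const_part_rot_left_up[OF const_part_0_4]]]
    by (simp add: numeral_eq_Suc)

lemma const_part_2_2: "fibre_part 2 2 (\<lambda>_. 0) \<in> C"
  using const_part_rot_left_up[OF const_part_rot_left_up[OF const_part_0_4]] by (simp add: numeral_eq_Suc)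

lemma words_cancel_pair_prefix: "[c, c] @ v \<in> words \<Longrightarrow> v \<in> words"
proof -
  assume h: "[c, c] @ v \<in> words"
  have X: "fibre_part 0 2 (\<lambda>_. 0) \<in> C" using C_pair pair_part_fibre_part[of 0] by simp
  have "[] @ map id v \<in> words"
  proof (rule replace_prefix[OF X h prefix_replacement.intro])
    fix x z assume "x \<in> points 0 2" "z \<in> points 0 2"
    then have "replace_label [] id [c, c] x = c" "replace_label [] id [c, c] z = c"
      by (auto simp: replace_label_def points_0_2)
    then show "replace_label [] id [c, c] x = replace_label [] id [c, c] z" by simp
  qed auto
  then show ?thesis by simp
qed

lemma words_triple_prefix: "[y] @ v \<in> words \<Longrightarrow> [y, y, y] @ v \<in> words"
proof -
  assume h: "[y] @ v \<in> words"
  have "[y, y, y] @ map id v \<in> words"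
  proof (rule replace_prefix[OF const_part_3_1 h prefix_replacement.intro])
    fix x z assume "x \<in> points 3 1" "z \<in> points 3 1"
    then have "replace_label [y, y, y] id [y] x = y" "replace_label [y, y, y] id [y] z = y"
      by (auto simp: replace_label_def points_def nth_Cons' numeral_eq_Suc less_Suc_eq)
    then show "replace_label [y, y, y] id [y] x = replace_label [y, y, y] id [y] z" by simp
  qed auto
  then show ?thesis by simp
qed

lemma words_merge_prefix:
  "[a, b] @ v \<in> words \<Longrightarrow> map (\<lambda>x. if x = b then a else x) ([a, b] @ v) \<in> words"
proof -
  assume h: "[a, b] @ v \<in> words"
  let ?f = "\<lambda>x. if x = b then a else x"
  have "[a, a] @ map ?f v \<in> words"
  proof (rule replace_prefix[OF const_part_2_2 h prefix_replacement.intro])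
    fix x z assume "x \<in> points 2 2" "z \<in> points 2 2"
    then have "replace_label [a, a] ?f [a, b] x = a" "replace_label [a, a] ?f [a, b] z = a"
      by (auto simp: replace_label_def points_def nth_Cons' numeral_eq_Suc less_Suc_eq)
    then show "replace_label [a, a] ?f [a, b] x = replace_label [a, a] ?f [a, b] z" by simp
  next
    fix c d assume "c \<noteq> d" "?f c = ?f d"
    then have "(c = a \<and> d = b) \<or> (c = b \<and> d = a)" by (auto split: if_splits)
    then show "\<exists>j1<2. \<exists>j2<2. [a, b] ! j1 = c \<and> [a, b] ! j2 = d \<and> (0::nat) = 0"
      by (elim disjE) (rule exI[of _ 0] exI[of _ 1]; simp)+
  qed auto
  then show ?thesis by simp
qed

lemma words_move_pair_prefix: "[y, y, c] @ v \<in> words \<Longrightarrow> [c, y, y] @ v \<in> words"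
proof -
  assume h: "[y, y, c] @ v \<in> words"
  have X: "fibre_part 3 3 (\<lambda>x. positioner_label (flip_pt x)) \<in> C"
    using C_involution[OF pair_positioner_in] unfolding pair_positioner_fibre_part involution_fibre_part .
  have "[c, y, y] @ map id v \<in> words"
  proof (rule replace_prefix[OF X h prefix_replacement.intro])
    fix x z assume "x \<in> points 3 3" "z \<in> points 3 3" "positioner_label (flip_pt x) = positioner_label (flip_pt z)"
    then show "replace_label [c, y, y] id [y, y, c] x = replace_label [c, y, y] id [y, y, c] z"
      unfolding points_3_3 by (auto simp: replace_label_def positioner_label_def)
  next
    fix i :: nat assume "i < 3"
    then have "i = 0 \<or> i = 1 \<or> i = 2" by auto
    then show "\<exists>j<3. positioner_label (flip_pt (Up i)) = positioner_label (flip_pt (Lo j))"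
      by (elim disjE) (rule exI[of _ 2] exI[of _ 0]; simp add: positioner_label_def)+
  qed auto
  then show ?thesis by simp
qed

lemma words_prefix_rule:
  "(\<And>v. s1 @ v \<in> words \<Longrightarrow> s2 @ v \<in> words) \<Longrightarrow> u @ s1 @ v \<in> words \<Longrightarrow> u @ s2 @ v \<in> words"
proof -
  assume op: "\<And>v. s1 @ v \<in> words \<Longrightarrow> s2 @ v \<in> words" and h: "u @ s1 @ v \<in> words"
  have "(s1 @ v) @ u \<in> words" using words_rotate[OF h] .
  then have "s2 @ (v @ u) \<in> words" using op by simp
  then have "(s2 @ v) @ u \<in> words" by simp
  then show ?thesis using words_rotate by fastforce
qed

lemma words_cancel_pair: "u @ [c, c] @ v \<in> words \<Longrightarrow> u @ v \<in> words"
  using words_prefix_rule[of "[c, c]" "[]"] words_cancel_pair_prefix by auto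

lemma words_triple: "u @ [y] @ v \<in> words \<Longrightarrow> u @ [y, y, y] @ v \<in> words"
  using words_prefix_rule[of "[y]" "[y, y, y]"] words_triple_prefix by auto

lemma words_move_pair: "u @ [y, y, c] @ v \<in> words \<Longrightarrow> u @ [c, y, y] @ v \<in> words"
  using words_prefix_rule[of "[y, y, c]" "[c, y, y]"] words_move_pair_prefix by auto

lemma words_merge_adjacent:
  "u @ [a, b] @ v \<in> words \<Longrightarrow> map (\<lambda>x. if x = b then a else x) (u @ [a, b] @ v) \<in> words"
proof -
  let ?f = "\<lambda>x. if x = b then a else x"
  assume "u @ [a, b] @ v \<in> words"
  then have "[a, b] @ (v @ u) \<in> words" using words_rotate by fastforce
  then have "map ?f ([a, b] @ v) @ map ?f u \<in> words" using words_merge_prefix by fastforce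
  then have "map ?f u @ map ?f ([a, b] @ v) \<in> words" by (rule words_rotate)
  then show ?thesis by simp
qed

lemma words_move_pair_right: "u @ [y, y] @ m @ v \<in> words \<Longrightarrow> u @ m @ [y, y] @ v \<in> words"
proof (induction m arbitrary: u)
  case Nil then show ?case by simp
next
  case (Cons c m)
  have "u @ [y, y, c] @ (m @ v) \<in> words" using Cons.prems by simp
  then have "u @ [c, y, y] @ (m @ v) \<in> words" by (rule words_move_pair)
  then have "(u @ [c]) @ [y, y] @ m @ v \<in> words" by simp
  then have "(u @ [c]) @ m @ [y, y] @ v \<in> words" by (rule Cons.IH)
  then show ?case by simp
qed

text \<open>To merge two distinct letters a and b anywhere in a word, triple b, move the pair bb
  next to a, merge the adjacent letters a b and cancel the resulting pair aa.\<close>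

lemma words_merge:
  assumes xs: "xs \<in> words" and a: "a \<in> set xs" and b: "b \<in> set xs"
  shows "map (\<lambda>x. if x = b then a else x) xs \<in> words"
proof (cases "a = b")
  case True
  then have "map (\<lambda>x. if x = b then a else x) xs = xs" by (induction xs) auto
  then show ?thesis using xs by simp
next
  case False
  let ?f = "\<lambda>x. if x = b then a else x"
  obtain u r where ur: "xs = u @ b # r" using b by (meson split_list)
  define zs where "zs = r @ u"
  have h1: "[b] @ zs \<in> words" using words_rotate[of u "b # r"] xs ur by (simp add: zs_def)
  have "a \<in> set zs" using a ur False by (auto simp: zs_def)
  then obtain z1 z2 where z: "zs = z1 @ a # z2" by (meson split_list)
  have "[] @ [b, b, b] @ zs \<in> words" using words_triple[of "[]" b zs] h1 by simp
  then have "[b] @ [b, b] @ (z1 @ [a]) @ z2 \<in> words" using z by simp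
  then have "[b] @ (z1 @ [a]) @ [b, b] @ z2 \<in> words" by (rule words_move_pair_right)
  then have "(b # z1) @ [a, b] @ (b # z2) \<in> words" by simp
  then have "map ?f ((b # z1) @ [a, b] @ (b # z2)) \<in> words" by (rule words_merge_adjacent)
  then have "(a # map ?f z1) @ [a, a] @ (a # map ?f z2) \<in> words" using False by simp
  then have "(a # map ?f z1) @ (a # map ?f z2) \<in> words" by (rule words_cancel_pair)
  moreover have "(a # map ?f z1) @ (a # map ?f z2) = map ?f (b # r) @ map ?f u"
  proof -
    have "(a # map ?f z1) @ (a # map ?f z2) = map ?f (b # z1 @ a # z2)" using False by simp
    also have "\<dots> = map ?f (b # zs)" using z by simp
    finally show ?thesis by (simp add: zs_def)
  qed
  ultimately have "map ?f (b # r) @ map ?f u \<in> words" by simp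
  then have "map ?f u @ map ?f (b # r) \<in> words" by (rule words_rotate)
  then show ?thesis using ur by simp
qed

lemma words_map: "xs \<in> words \<Longrightarrow> map h xs \<in> words"
proof (induction "card (set xs)" arbitrary: xs rule: less_induct)
  case less
  show ?case
  proof (cases "inj_on h (set xs)")
    case True then show ?thesis using words_map_inj less.prems by simp
  next
    case False
    then obtain a b where ab: "a \<in> set xs" "b \<in> set xs" "a \<noteq> b" "h a = h b"
      unfolding inj_on_def by blast
    let ?f = "\<lambda>x. if x = b then a else x"
    have w: "map ?f xs \<in> words" using words_merge[OF less.prems ab(1,2)] .
    have "set (map ?f xs) \<subseteq> set xs - {b}" using ab by auto
    then have "card (set (map ?f xs)) < card (set xs)"
      using ab(2) by (meson card_Diff1_less List.finite_set finite_Diff le_less_trans card_mono)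
    then have "map h (map ?f xs) \<in> words" using less.hyps w by blast
    moreover have "map h (map ?f xs) = map h xs" using ab by (auto intro: map_cong)
    ultimately show ?thesis by metis
  qed
qed

lemma words_concat: "xs \<in> words \<Longrightarrow> ys \<in> words \<Longrightarrow> xs @ ys \<in> words"
proof -
  assume "xs \<in> words" "ys \<in> words"
  then have "map (\<lambda>c. Suc (2 * c)) ys @ map (\<lambda>c. 2 * c) xs \<in> words" by (rule words_tensor)
  then have "map (\<lambda>c. c div 2) (map (\<lambda>c. Suc (2 * c)) ys @ map (\<lambda>c. 2 * c) xs) \<in> words" by (rule words_map)
  then have "ys @ xs \<in> words" by (simp add: comp_def)
  then show ?thesis by (rule words_rotate)
qed

lemma words_insert_pair: "u @ v \<in> words \<Longrightarrow> u @ [x, x] @ v \<in> words"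
proof -
  assume "u @ v \<in> words"
  then have "v @ u \<in> words" by (rule words_rotate)
  then have "([x, x] @ v) @ u \<in> words" using words_concat[OF words_pair] by simp
  then show ?thesis using words_rotate by fastforce
qed

lemma words_red_suffix: "u @ xs \<in> words \<longleftrightarrow> u @ red xs \<in> words"
proof (induction xs arbitrary: u)
  case Nil then show ?case by simp
next
  case (Cons x xs)
  have "u @ x # xs \<in> words \<longleftrightarrow> (u @ [x]) @ red xs \<in> words"
    using Cons.IH[of "u @ [x]"] by simp
  also have "\<dots> \<longleftrightarrow> u @ red (x # xs) \<in> words"
  proof (cases "\<exists>w. red xs = x # w")
    case True
    then obtain w where w: "red xs = x # w" by blast
    then have "red (x # xs) = w" by (simp add: red_Cons cancel_cons_def)
    then show ?thesis using w words_cancel_pair[of u x w] words_insert_pair[of u w x] by auto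
  next
    case False
    then have "red (x # xs) = x # red xs" by (auto simp: red_Cons cancel_cons_def split: list.splits)
    then show ?thesis by simp
  qed
  finally show ?case .
qed

lemma words_red: "xs \<in> words \<longleftrightarrow> red xs \<in> words"
  using words_red_suffix[of "[]"] by simp

lemma words_nil: "[] \<in> words"
  using words_cancel_pair[of "[]" 0 "[]"] words_pair[of 0] by simp

end


locale simplifiable_hyperoctahedral_category = simplifiable_category +
  assumes double_singleton_notin: "double_singleton \<notin> C"
begin

lemma words_distinct_pair: "a \<noteq> b \<Longrightarrow> [a, b] \<notin> words"
proof
  assume ab: "a \<noteq> b" and w: "[a, b] \<in> words"
  define h where "h x = (if x = a then 1 else (0::nat))" for x
  have "map h [a, b] \<in> words" using words_map w by blast
  then have "[1, 0] \<in> words" using ab by (simp add: h_def)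
  then have "fibre_part 0 (length [1::nat, 0]) (word_label 0 [1, 0]) \<in> C"
    using in_words_iff_fibre_part[of 0 "[1, 0]"] by simp
  then have "fibre_part 0 2 (word_label 0 [1, 0]) \<in> C" by (simp add: numeral_2_eq_2)
  moreover have "fibre_part 0 2 (word_label 0 [1, 0]) = fibre_part 0 2 double_singleton_label"
    by (rule fibre_part_cong) (auto simp: points_0_2 word_label_def double_singleton_label_def)
  ultimately show False using double_singleton_notin double_singleton_fibre_part by simp
qed

lemma words_odd_replicate: "replicate (Suc (2 * m)) c \<in> words \<Longrightarrow> [c] \<in> words"
proof (induction m)
  case 0 then show ?case by simp
next
  case (Suc m)
  have "[c, c] @ replicate (Suc (2 * m)) c \<in> words" using Suc.prems by (simp add: numeral_eq_Suc)
  then show ?case using words_cancel_pair_prefix Suc.IH by blast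
qed

lemma words_even: "xs \<in> words \<Longrightarrow> even (length xs)"
proof (rule ccontr)
  assume xs: "xs \<in> words" and odd: "\<not> even (length xs)"
  then obtain m where m: "length xs = Suc (2 * m)" by (metis oddE Suc_eq_plus1)
  have "map (\<lambda>_. 0::nat) xs \<in> words" using words_map xs by blast
  moreover have "map (\<lambda>_. 0::nat) xs = replicate (Suc (2 * m)) 0" using m
    by (simp add: map_replicate_const)
  ultimately have "[0] \<in> words" using words_odd_replicate by simp
  then have "map (\<lambda>c. Suc (2 * c)) [0] @ map (\<lambda>c. 2 * c) [0] \<in> words" using words_tensor
    by blast
  then have "[1, 0] \<in> words" by simp
  then show False using words_distinct_pair[of 1 0] by simp
qed

lemma Fcat_eq_reduced_words: "Fcat C = {xs \<in> words. reduced xs}"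
proof
  show "Fcat C \<subseteq> {xs \<in> words. reduced xs}"
  proof
    fix z assume "z \<in> Fcat C"
    then obtain p lab where p: "z = piw (word p lab)" "p \<in> C" "labelling p lab" unfolding Fcat_def
      by blast
    have "p \<in> Parts" using p C_Parts by blast
    then have "p = fibre_part (upk p) (lol p) (\<lambda>x. lab (block_of p x))" using Parts_eq_fibre_part p
      by blast
    then have "label_word (upk p) (lol p) (\<lambda>x. lab (block_of p x)) \<in> words"
      using fibre_part_in_iff p(2) by metis
    then have "red (word p lab) \<in> words" using words_red by (simp add: word_label_word)
    then show "z \<in> {xs \<in> words. reduced xs}" using p by (simp add: piw_red)
  qed
  show "{xs \<in> words. reduced xs} \<subseteq> Fcat C"
  proof
    fix xs assume "xs \<in> {xs \<in> words. reduced xs}"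
    then show "xs \<in> Fcat C" by (intro reduced_in_Fcat) (simp_all add: words_def)
  qed
qed

lemma Fcat_proper_S0_subgroup: "proper_S0_inv_subgroup_of_E (Fcat C)"
proof -
  have subgroup_H: "subgroup (Fcat C) Z2free"
  proof
    show "Fcat C \<subseteq> carrier Z2free" by (auto simp: Fcat_eq_reduced_words)
    show "\<one>\<^bsub>Z2free\<^esub> \<in> Fcat C" by (simp add: Fcat_eq_reduced_words words_nil)
    fix x y assume x: "x \<in> Fcat C" and y: "y \<in> Fcat C"
    then show "x \<otimes>\<^bsub>Z2free\<^esub> y \<in> Fcat C" using words_concat words_red
      by (simp add: Fcat_eq_reduced_words)
    show "inv\<^bsub>Z2free\<^esub> x \<in> Fcat C" using x words_rev
      by (simp add: Fcat_eq_reduced_words Z2_inv reduced_rev)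
  qed
  have sub: "Fcat C \<subseteq> Ev" by (auto simp: Fcat_eq_reduced_words Ev_def words_even)
  have ne: "Fcat C \<noteq> Ev"
  proof
    assume "Fcat C = Ev"
    moreover have "[0, 1] \<in> Ev" by (simp add: Ev_def reduced_def)
    ultimately have "[0, 1] \<in> {xs \<in> words. reduced xs}" by (simp add: Fcat_eq_reduced_words)
    then have "[0, 1] \<in> words" by blast
    then show False using words_distinct_pair[of 0 1] by simp
  qed
  have inv: "S0_invariant (Fcat C)"
    unfolding S0_invariant_def
  proof
    fix \<phi> assume "\<phi> \<in> S0"
    then show "\<phi> ` Fcat C \<subseteq> Fcat C"
    proof (induction rule: S0.induct)
      case (gen_subst n idx)
      show ?case
      proof
        fix z assume "z \<in> subst_endo n idx ` Fcat C"
        then obtain xs where "z = subst_endo n idx xs" "xs \<in> words" unfolding Fcat_eq_reduced_words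
          by blast
        then show "z \<in> Fcat C" unfolding Fcat_eq_reduced_words subst_endo_def piw_red
          using words_map words_red by simp
      qed
    next
      case (gen_conj k)
      show ?case
      proof
        fix z assume "z \<in> conj_endo k ` Fcat C"
        then obtain xs where z: "z = conj_endo k xs" "xs \<in> words" unfolding Fcat_eq_reduced_words by blast
        have "[k, k] @ xs \<in> words" using words_concat[OF words_pair z(2)] .
        then have "[k] @ ([k] @ xs) \<in> words" by simp
        then have "([k] @ xs) @ [k] \<in> words" by (rule words_rotate)
        then have "red ([k] @ xs @ [k]) \<in> words" using words_red by simp
        moreover have "z = red ([k] @ xs @ [k])"
          using z by (simp add: conj_endo_def red_append_left)
        ultimately show "z \<in> Fcat C" by (simp add: Fcat_eq_reduced_words)
      qed
    next
      case (comp \<phi> \<psi>)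
      then show ?case by (auto simp: image_comp[symmetric])
    qed
  qed
  show ?thesis unfolding proper_S0_inv_subgroup_of_E_def using subgroup_H sub ne inv by blast
qed

lemma CH_Fcat: "CH (Fcat C) = C"
proof
  show "CH (Fcat C) \<subseteq> C"
  proof
    fix p assume "p \<in> CH (Fcat C)"
    then obtain lab where p: "p \<in> Parts" "labelling p lab" "piw (word p lab) \<in> Fcat C"
      unfolding CH_def by blast
    then have "red (word p lab) \<in> words" by (simp add: Fcat_eq_reduced_words piw_red)
    then have "label_word (upk p) (lol p) (\<lambda>x. lab (block_of p x)) \<in> words" using words_red
      by (simp add: word_label_word)
    then have "fibre_part (upk p) (lol p) (\<lambda>x. lab (block_of p x)) \<in> C" using fibre_part_in_iff
      by blast
    then show "p \<in> C" using Parts_eq_fibre_part[OF p(1,2)] by simp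
  qed
  show "C \<subseteq> CH (Fcat C)"
  proof
    fix p assume pC: "p \<in> C"
    then have P: "p \<in> Parts" using C_Parts by blast
    then obtain lab where lab: "labelling p lab" using Parts_labelling_exists by blast
    have "fibre_part (upk p) (lol p) (\<lambda>x. lab (block_of p x)) \<in> C"
      using Parts_eq_fibre_part[OF P lab] pC by simp
    then have "word p lab \<in> words" using fibre_part_in_iff by (simp add: word_label_word)
    then have "piw (word p lab) \<in> Fcat C" using words_red by (simp add: Fcat_eq_reduced_words piw_red)
    then show "p \<in> CH (Fcat C)" unfolding CH_def using P lab by blast
  qed
qed

end


section \<open>From subgroups to categories\<close>

locale proper_S0_subgroup =
  fixes H :: "nat list set"
  assumes proper: "proper_S0_inv_subgroup_of_E H"
begin

lemma
  shows subgroup_H: "subgroup H Z2free" and H_subset_Ev: "H \<subseteq> Ev" and H_neq_Ev: "H \<noteq> Ev"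
    and H_S0_invariant: "S0_invariant H"
  using proper by (simp_all add: proper_S0_inv_subgroup_of_E_def)

lemma H_red: "x \<in> H \<Longrightarrow> reduced x" using H_subset_Ev by (auto simp: Ev_def)
lemma H_nil: "[] \<in> H" using subgroup.one_closed[OF subgroup_H] by simp
lemma H_mult:
  "x \<in> H \<Longrightarrow> y \<in> H \<Longrightarrow> red (x @ y) \<in> H"
    using subgroup.m_closed[OF subgroup_H] by simp

lemma H_map: "x \<in> H \<Longrightarrow> red (map h x) \<in> H"
proof -
  assume x: "x \<in> H"
  define n where "n = Suc (Max (insert 0 (set x)))"
  have lt: "c \<in> set x \<Longrightarrow> c < n" for c unfolding n_def by (simp add: le_imp_less_Suc)
  have "subst_endo n h \<in> S0" by (rule S0.gen_subst)
  then have "subst_endo n h x \<in> H" using H_S0_invariant x unfolding S0_invariant_def by blast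
  moreover have "subst_endo n h x = red (map h x)"
  proof -
    have "map (\<lambda>k. if k < n then h k else k) x = map h x" using lt by (intro map_cong) auto
    then show ?thesis unfolding subst_endo_def piw_red by (rule arg_cong)
  qed
  ultimately show ?thesis by simp
qed

lemma H_conj_letter: "x \<in> H \<Longrightarrow> red ([k] @ x @ [k]) \<in> H"
proof -
  assume x: "x \<in> H"
  have "conj_endo k \<in> S0" by (rule S0.gen_conj)
  then have "conj_endo k x \<in> H" using H_S0_invariant x unfolding S0_invariant_def by blast
  then show ?thesis by (simp add: conj_endo_def red_append_left)
qed

definition Hwords :: "nat list set" where "Hwords = {xs. red xs \<in> H}"

lemma Hwords_map: "xs \<in> Hwords \<Longrightarrow> map h xs \<in> Hwords"
proof -
  assume "xs \<in> Hwords"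
  then have "red xs \<in> H" unfolding Hwords_def by simp
  then have "red (map h (red xs)) \<in> H" by (rule H_map)
  then show ?thesis unfolding Hwords_def red_map by simp
qed

lemma Hwords_coarsen:
  assumes "label_word k l g \<in> Hwords"
    and "\<And>x y. x \<in> points k l \<Longrightarrow> y \<in> points k l \<Longrightarrow> g x = g y \<Longrightarrow> g' x = g' y"
  shows "label_word k l g' \<in> Hwords"
proof -
  obtain h where h: "\<forall>x\<in>points k l. g' x = h (g x)"
    using factor_through[of "points k l" g g'] assms(2) by blast
  have "label_word k l g' = map h (label_word k l g)"
    using label_word_cong[of k l g' "\<lambda>x. h (g x)"] h label_word_comp[of k l h g] by simp
  then show ?thesis using Hwords_map[OF assms(1)] by simp
qed

lemma Hwords_concat:
  "xs \<in> Hwords \<Longrightarrow> ys \<in> Hwords \<Longrightarrow> xs @ ys \<in> Hwords"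
proof -
  assume "xs \<in> Hwords" "ys \<in> Hwords"
  then have "red xs \<in> H" "red ys \<in> H" unfolding Hwords_def by simp_all
  then have "red (red xs @ red ys) \<in> H" by (rule H_mult)
  then show ?thesis unfolding Hwords_def red_append_left red_append_right by simp
qed

lemma Hwords_rev: "xs \<in> Hwords \<Longrightarrow> rev xs \<in> Hwords"
proof -
  assume "xs \<in> Hwords"
  then have "red xs \<in> H" by (simp add: Hwords_def)
  then have "inv\<^bsub>Z2free\<^esub> (red xs) \<in> H" using subgroup.m_inv_closed[OF subgroup_H] by blast
  then show ?thesis by (simp add: Hwords_def Z2_inv red_rev)
qed

lemma Hwords_conj: "xs \<in> Hwords \<Longrightarrow> u @ xs @ rev u \<in> Hwords"
proof (induction u)
  case Nil then show ?case by simp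
next
  case (Cons a u)
  then have "red (u @ xs @ rev u) \<in> H" by (simp add: Hwords_def)
  then have "red ([a] @ red (u @ xs @ rev u) @ [a]) \<in> H" by (rule H_conj_letter)
  moreover have "red ([a] @ red (u @ xs @ rev u) @ [a]) = red ([a] @ (u @ xs @ rev u) @ [a])"
  proof -
    have "red ([a] @ (red (u @ xs @ rev u) @ [a])) = red ([a] @ red (red (u @ xs @ rev u) @ [a]))"
      by (simp only: red_append_right)
    also have "\<dots> = red ([a] @ red ((u @ xs @ rev u) @ [a]))" by (simp only: red_append_left)
    also have "\<dots> = red ([a] @ ((u @ xs @ rev u) @ [a]))" by (simp only: red_append_right)
    finally show ?thesis by simp
  qed
  ultimately show ?case by (simp add: Hwords_def)
qed

lemma Hwords_rotate_first: "a # xs \<in> Hwords \<Longrightarrow> xs @ [a] \<in> Hwords"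
proof -
  assume "a # xs \<in> Hwords"
  then have "[a] @ (a # xs) @ rev [a] \<in> Hwords" by (rule Hwords_conj)
  moreover have "red ([a] @ (a # xs) @ rev [a]) = red (xs @ [a])" using red_cancel[of "[]" a "xs @ [a]"]
    by simp
  ultimately show ?thesis by (simp add: Hwords_def)
qed

lemma Hwords_rotate_last: "xs @ [a] \<in> Hwords \<Longrightarrow> a # xs \<in> Hwords"
proof -
  assume "xs @ [a] \<in> Hwords"
  then have "[a] @ (xs @ [a]) @ rev [a] \<in> Hwords" by (rule Hwords_conj)
  moreover have "red ([a] @ (xs @ [a]) @ rev [a]) = red (a # xs)" using red_cancel[of "a # xs" a "[]"] by simp
  ultimately show ?thesis by (simp add: Hwords_def)
qed

lemma Ev_subset_if_distinct_pair:
  "[a, b] \<in> Hwords \<Longrightarrow> a \<noteq> b \<Longrightarrow> Ev \<subseteq> H"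
proof
  assume ab: "[a, b] \<in> Hwords" "a \<noteq> b"
  have two: "c \<noteq> d \<Longrightarrow> [c, d] \<in> H" for c d
  proof -
    assume cd: "c \<noteq> d"
    define h where "h x = (if x = a then c else d)" for x
    have "map h [a, b] \<in> Hwords" using Hwords_map ab by blast
    then have "red [c, d] \<in> H" using ab by (simp add: Hwords_def h_def)
    moreover have "reduced [c, d]" using cd by (simp add: reduced_def nth_Cons')
    ultimately show ?thesis by (simp add: red_reduced)
  qed
  have main: "reduced xs \<Longrightarrow> even (length xs) \<Longrightarrow> xs \<in> H" for xs
  proof (induction xs rule: length_induct)
    case (1 xs)
    show ?case
    proof (cases xs)
      case Nil then show ?thesis using H_nil by simp
    next
      case (Cons c r)
      then obtain d rest where r: "r = d # rest" using 1 by (cases r) auto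
      have red1: "reduced (c # d # rest)" using 1 Cons r by simp
      then have "reduced rest" "c \<noteq> d" by (auto simp: reduced_Cons)
      moreover have "even (length rest)" using 1 Cons r by simp
      ultimately have "rest \<in> H" "[c, d] \<in> H" using 1 Cons r two by auto
      then have "red ([c, d] @ rest) \<in> H" using H_mult by blast
      then show ?thesis using red1 Cons r by (simp add: red_reduced)
    qed
  qed
  fix xs assume "xs \<in> Ev"
  then show "xs \<in> H" using main by (simp add: Ev_def)
qed

lemma Hwords_distinct_pair: "a \<noteq> b \<Longrightarrow> [a, b] \<notin> Hwords"
  using Ev_subset_if_distinct_pair H_subset_Ev H_neq_Ev by blast

lemma fibre_part_in_CH_iff: "fibre_part k l g \<in> CH H \<longleftrightarrow> label_word k l g \<in> Hwords"
proof
  assume "fibre_part k l g \<in> CH H"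
  then obtain lab where lab: "labelling (fibre_part k l g) lab" "piw (word (fibre_part k l g) lab) \<in> H"
    unfolding CH_def by blast
  define g' where "g' = (\<lambda>x. lab (block_of (fibre_part k l g) x))"
  have e: "fibre_part k l g = fibre_part k l g'"
    using Parts_eq_fibre_part[OF fibre_part_Parts lab(1)] by (simp add: g'_def)
  have "label_word k l g' \<in> Hwords" using lab(2) by (simp add: Hwords_def piw_red word_label_word g'_def)
  then show "label_word k l g \<in> Hwords" using fibre_part_eqD[OF e] by (rule Hwords_coarsen)
next
  assume w: "label_word k l g \<in> Hwords"
  obtain lab where "labelling (fibre_part k l g) lab" "word (fibre_part k l g) lab = label_word k l g"
    using fibre_part_labelling by blast
  then show "fibre_part k l g \<in> CH H" using w fibre_part_Parts unfolding CH_def Hwords_def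
    by (auto simp: piw_red)
qed

lemma CH_fibre_part_rep:
  "p \<in> CH H \<Longrightarrow> \<exists>g. p = fibre_part (upk p) (lol p) g \<and> label_word (upk p) (lol p) g \<in> Hwords"
proof -
  assume "p \<in> CH H"
  then obtain lab where lab: "p \<in> Parts" "labelling p lab" "piw (word p lab) \<in> H"
    unfolding CH_def by blast
  then show ?thesis using Parts_eq_fibre_part[OF lab(1,2)]
    by (intro exI[of _ "\<lambda>x. lab (block_of p x)"]) (simp add: Hwords_def piw_red word_label_word)
qed

lemma Hwords_pair: "[c, c] \<in> Hwords" using H_nil by (simp add: Hwords_def red_Cons cancel_cons_def)

lemma CH_tensor: "p \<in> CH H \<Longrightarrow> q \<in> CH H \<Longrightarrow> tensor p q \<in> CH H"
proof -
  assume "p \<in> CH H" "q \<in> CH H"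
  then obtain g1 g2 where p: "p = fibre_part (upk p) (lol p) g1" "label_word (upk p) (lol p) g1 \<in> Hwords"
    and q: "q = fibre_part (upk q) (lol q) g2" "label_word (upk q) (lol q) g2 \<in> Hwords"
      using CH_fibre_part_rep by metis
  define k l k' l' where "k = upk p" "l = lol p" "k' = upk q" "l' = lol q"
  define A where "A = map (\<lambda>c. 2 * c) (map (\<lambda>i. g1 (Up i)) [0..<k])"
  define B where "B = map (\<lambda>c. 2 * c) (rev (map (\<lambda>j. g1 (Lo j)) [0..<l]))"
  define w2 where "w2 = map (\<lambda>c. Suc (2 * c)) (label_word k' l' g2)"
  have AB: "A @ B \<in> Hwords" using Hwords_map[OF p(2), of "\<lambda>c. 2 * c"]
    by (simp add: A_def B_def k_l_k'_l'_def label_word_def)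
  have w2: "w2 \<in> Hwords" using Hwords_map[OF q(2)] by (simp add: w2_def k_l_k'_l'_def)
  have "(A @ w2 @ rev A) @ (A @ B) \<in> Hwords" using Hwords_concat[OF Hwords_conj[OF w2] AB] .
  moreover have "red ((A @ w2 @ rev A) @ (A @ B)) = red (A @ w2 @ B)"
    using red_cancel_rev[of "A @ w2" A B] by simp
  ultimately have "A @ w2 @ B \<in> Hwords" by (simp add: Hwords_def)
  then have "label_word (k + k') (l + l') (tensor_label k l g1 g2) \<in> Hwords"
    by (simp add: label_word_tensor A_def B_def w2_def)
  then have "fibre_part (k + k') (l + l') (tensor_label k l g1 g2) \<in> CH H" using fibre_part_in_CH_iff
    by blast
  then show "tensor p q \<in> CH H" using p(1) q(1) by (metis tensor_fibre_part k_l_k'_l'_def)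
qed

lemma CH_involution: "p \<in> CH H \<Longrightarrow> involution p \<in> CH H"
proof -
  assume "p \<in> CH H"
  then obtain g where p: "p = fibre_part (upk p) (lol p) g" "label_word (upk p) (lol p) g \<in> Hwords"
    using CH_fibre_part_rep by blast
  have "label_word (lol p) (upk p) (\<lambda>x. g (flip_pt x)) \<in> Hwords" using Hwords_rev[OF p(2)]
    by (simp add: label_word_involution)
  then show ?thesis using fibre_part_in_CH_iff p(1) by (metis involution_fibre_part)
qed

lemma CH_rot_left_down:
  "p \<in> CH H \<Longrightarrow> 0 < upk p \<Longrightarrow> rot_left_down p \<in> CH H"
proof -
  assume "p \<in> CH H" "0 < upk p"
  then obtain g where p: "p = fibre_part (upk p) (lol p) g" "label_word (upk p) (lol p) g \<in> Hwords"
    using CH_fibre_part_rep by blast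
  obtain k where k: "upk p = Suc k" using \<open>0 < upk p\<close> by (cases "upk p") auto
  obtain a r where ar: "label_word (Suc k) (lol p) g = a # r"
    by (cases "label_word (Suc k) (lol p) g") (auto simp: label_word_def)
  have "r @ [a] \<in> Hwords" using Hwords_rotate_first p(2) k ar by simp
  then have "label_word k (Suc (lol p)) (\<lambda>x. g (rotLU_pt x)) \<in> Hwords"
    using label_word_rot_left_down[OF ar] by simp
  then have "fibre_part k (Suc (lol p)) (\<lambda>x. g (rotLU_pt x)) \<in> CH H" using fibre_part_in_CH_iff
    by blast
  then show ?thesis using p(1) k by (metis rot_left_down_fibre_part)
qed

lemma CH_rot_left_up: "p \<in> CH H \<Longrightarrow> 0 < lol p \<Longrightarrow> rot_left_up p \<in> CH H"
proof -
  assume "p \<in> CH H" "0 < lol p"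
  then obtain g where p: "p = fibre_part (upk p) (lol p) g" "label_word (upk p) (lol p) g \<in> Hwords"
    using CH_fibre_part_rep by blast
  obtain l where l: "lol p = Suc l" using \<open>0 < lol p\<close> by (cases "lol p") auto
  obtain a r where ar: "label_word (upk p) (Suc l) g = r @ [a]"
    by (cases "label_word (upk p) (Suc l) g" rule: rev_exhaust) (auto simp: label_word_def)
  have "a # r \<in> Hwords" using Hwords_rotate_last p(2) l ar by simp
  then have "label_word (Suc (upk p)) l (\<lambda>x. g (rotUL_pt x)) \<in> Hwords"
    using label_word_rot_left_up[OF ar] by simp
  then have "fibre_part (Suc (upk p)) l (\<lambda>x. g (rotUL_pt x)) \<in> CH H" using fibre_part_in_CH_iff
    by blast
  then show ?thesis using p(1) l by (metis rot_left_up_fibre_part)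
qed

lemma CH_rot_right_down:
  "p \<in> CH H \<Longrightarrow> 0 < upk p \<Longrightarrow> rot_right_down p \<in> CH H"
proof -
  assume "p \<in> CH H" "0 < upk p"
  then obtain g where p: "p = fibre_part (upk p) (lol p) g" "label_word (upk p) (lol p) g \<in> Hwords"
    using CH_fibre_part_rep by blast
  obtain k where k: "upk p = Suc k" using \<open>0 < upk p\<close> by (cases "upk p") auto
  have "label_word k (Suc (lol p)) (\<lambda>x. g (rotLR_pt k (Suc (lol p)) x)) \<in> Hwords"
    using p(2) k by (simp add: label_word_rot_right_down)
  then have "fibre_part k (Suc (lol p)) (\<lambda>x. g (rotLR_pt k (Suc (lol p)) x)) \<in> CH H"
    using fibre_part_in_CH_iff by blast
  then show ?thesis using p(1) k by (metis rot_right_down_fibre_part)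
qed

lemma CH_rot_right_up: "p \<in> CH H \<Longrightarrow> 0 < lol p \<Longrightarrow> rot_right_up p \<in> CH H"
proof -
  assume "p \<in> CH H" "0 < lol p"
  then obtain g where p: "p = fibre_part (upk p) (lol p) g" "label_word (upk p) (lol p) g \<in> Hwords"
    using CH_fibre_part_rep by blast
  obtain l where l: "lol p = Suc l" using \<open>0 < lol p\<close> by (cases "lol p") auto
  have "label_word (Suc (upk p)) l (\<lambda>x. g (rotUR_pt (Suc (upk p)) l x)) \<in> Hwords"
    using p(2) l by (simp add: label_word_rot_right_up)
  then have "fibre_part (Suc (upk p)) l (\<lambda>x. g (rotUR_pt (Suc (upk p)) l x)) \<in> CH H"
    using fibre_part_in_CH_iff by blast
  then show ?thesis using p(1) l by (metis rot_right_up_fibre_part)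
qed

lemma CH_compose:
  assumes "p \<in> CH H" and "q \<in> CH H" and "lol p = upk q"
  shows "compose p q \<in> CH H"
proof -
  obtain g1 where p: "p = fibre_part (upk p) (lol p) g1" "label_word (upk p) (lol p) g1 \<in> Hwords"
    using CH_fibre_part_rep[OF assms(1)] by blast
  obtain g2 where q: "q = fibre_part (upk q) (lol q) g2" "label_word (upk q) (lol q) g2 \<in> Hwords"
    using CH_fibre_part_rep[OF assms(2)] by blast
  define k l m where "k = upk p" "l = lol p" "m = lol q"
  have p': "p = fibre_part k l g1" "label_word k l g1 \<in> Hwords" using p by (simp_all add: k_l_m_def)
  have q': "q = fibre_part l m g2" "label_word l m g2 \<in> Hwords" using q assms(3)
    by (simp_all add: k_l_m_def)
  define c where "c = compose_label p q"
  have w1: "label_word k l (\<lambda>x. c (emb_upper x)) \<in> Hwords"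
    using p'(2) by (rule Hwords_coarsen) (metis c_def compose_label_eq compose_rel_upperI p'(1))
  have w2: "label_word l m (\<lambda>x. c (emb_lower x)) \<in> Hwords"
    using q'(2) by (rule Hwords_coarsen) (metis c_def compose_label_eq compose_rel_lowerI q'(1))
  define U M D where "U = map (\<lambda>i. c (Top i)) [0..<k]" "M = map (\<lambda>j. c (Mid j)) [0..<l]"
    "D = map (\<lambda>j. c (Bot j)) [0..<m]"
  have "(U @ rev M) @ (M @ rev D) \<in> Hwords"
    using Hwords_concat[OF w1 w2] by (simp add: label_word_def U_M_D_def)
  moreover have "red ((U @ rev M) @ (M @ rev D)) = red (U @ rev D)" using red_cancel_rev[of U M "rev D"]
    by simp
  ultimately have "U @ rev D \<in> Hwords" by (simp add: Hwords_def)
  then have "label_word k m (\<lambda>x. c (emb_res x)) \<in> Hwords" by (simp add: label_word_def U_M_D_def)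
  then have "fibre_part k m (\<lambda>x. c (emb_res x)) \<in> CH H" using fibre_part_in_CH_iff by blast
  moreover have "compose p q = fibre_part k m (\<lambda>x. c (emb_res x))"
    by (simp add: compose_fibre_part c_def k_l_m_def)
  ultimately show ?thesis by simp
qed

lemma category_of_partitions_CH: "category_of_partitions (CH H)"
proof -
  have "CH H \<subseteq> Parts" by (auto simp: CH_def)
  moreover have "pair_part \<in> CH H"
    using fibre_part_in_CH_iff[of 0 2 "\<lambda>_. 0"] Hwords_pair[of 0] pair_part_fibre_part[of 0]
      by (simp add: label_word_def numeral_2_eq_2)
  moreover have "id_part \<in> CH H"
    using fibre_part_in_CH_iff[of 1 1 "\<lambda>_. 0"] Hwords_pair[of 0] id_part_fibre_part[of 0]
      by (simp add: label_word_def)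
  ultimately show ?thesis unfolding category_of_partitions_def
    by (intro conjI ballI impI)
      (simp_all add: CH_tensor CH_compose CH_involution
        CH_rot_left_down CH_rot_right_down CH_rot_left_up CH_rot_right_up)
qed

lemma simplifiable_hyperoctahedral_CH: "simplifiable_hyperoctahedral (CH H)"
proof -
  have "four_block \<in> CH H"
  proof -
    have "label_word 0 4 (\<lambda>_. 0) = [0, 0, 0, 0]" by (simp add: label_word_def numeral_eq_Suc)
    moreover have "red [0, 0, 0, 0] = []" by (simp add: red_Cons cancel_cons_def)
    ultimately show ?thesis
      using fibre_part_in_CH_iff[of 0 4 "\<lambda>_. 0"] four_block_fibre_part[of 0] H_nil
        by (simp add: Hwords_def)
  qed
  moreover have "pair_positioner \<in> CH H"
  proof -
    have "label_word 3 3 positioner_label = [0, 0, 1, 0, 0, 1]"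
      by (simp add: label_word_def numeral_eq_Suc positioner_label_def)
    moreover have "red [0, 0, 1, 0, 0, 1] = []" by (simp add: red_Cons cancel_cons_def)
    ultimately show ?thesis
      using fibre_part_in_CH_iff[of 3 3 positioner_label] pair_positioner_fibre_part H_nil
        by (simp add: Hwords_def)
  qed
  moreover have "double_singleton \<notin> CH H"
  proof
    assume "double_singleton \<in> CH H"
    then have "fibre_part 0 2 double_singleton_label \<in> CH H" using double_singleton_fibre_part by simp
    then have "label_word 0 2 double_singleton_label \<in> Hwords" using fibre_part_in_CH_iff by blast
    moreover have "label_word 0 2 double_singleton_label = [1, 0]"
      by (simp add: label_word_def numeral_2_eq_2 double_singleton_label_def)
    ultimately show False using Hwords_distinct_pair[of 1 0] by simp
  qed
  ultimately show ?thesis using category_of_partitions_CH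
    by (simp add: simplifiable_hyperoctahedral_def hyperoctahedral_def)
qed

lemma Fcat_CH: "Fcat (CH H) = H"
proof
  show "Fcat (CH H) \<subseteq> H"
  proof
    fix z assume "z \<in> Fcat (CH H)"
    then obtain p lab where p: "z = piw (word p lab)" "p \<in> CH H" "labelling p lab" unfolding Fcat_def
      by blast
    have P: "p \<in> Parts" using p(2) by (simp add: CH_def)
    have "fibre_part (upk p) (lol p) (\<lambda>x. lab (block_of p x)) \<in> CH H"
      using Parts_eq_fibre_part[OF P p(3)] p(2) by simp
    then have "word p lab \<in> Hwords" using fibre_part_in_CH_iff by (simp add: word_label_word)
    then show "z \<in> H" using p(1) by (simp add: Hwords_def piw_red)
  qed
  show "H \<subseteq> Fcat (CH H)"
  proof
    fix xs assume xs: "xs \<in> H"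
    then have "xs \<in> Hwords" by (simp add: Hwords_def red_reduced H_red)
    then have "word_part xs \<in> CH H"
      unfolding word_part_def using fibre_part_in_CH_iff label_word_word_part by simp
    then show "xs \<in> Fcat (CH H)" using H_red[OF xs] by (rule reduced_in_Fcat[rotated])
  qed
qed

end


lemma simplifiable_hyperoctahedral_category_intro:
  "simplifiable_hyperoctahedral C \<Longrightarrow> simplifiable_hyperoctahedral_category C"
  unfolding simplifiable_hyperoctahedral_def hyperoctahedral_def
  by (intro simplifiable_hyperoctahedral_category.intro simplifiable_category.intro
      partition_category.intro simplifiable_category_axioms.intro
      simplifiable_hyperoctahedral_category_axioms.intro) auto

lemma Fcat_mono: "C1 \<subseteq> C2 \<Longrightarrow> Fcat C1 \<subseteq> Fcat C2"
  unfolding Fcat_def by blast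

lemma CH_mono: "H1 \<subseteq> H2 \<Longrightarrow> CH H1 \<subseteq> CH H2"
  unfolding CH_def by blast

theorem mainTheorem8:
  shows "(\<forall>C. simplifiable_hyperoctahedral C \<longrightarrow> proper_S0_inv_subgroup_of_E (Fcat C))
    \<and> (\<forall>H. proper_S0_inv_subgroup_of_E H \<longrightarrow>
           simplifiable_hyperoctahedral (CH H) \<and> Fcat (CH H) = H)
    \<and> (\<forall>C. simplifiable_hyperoctahedral C \<longrightarrow> CH (Fcat C) = C)
    \<and> bij_betw Fcat {C. simplifiable_hyperoctahedral C} {H. proper_S0_inv_subgroup_of_E H}
    \<and> (\<forall>C1 C2. simplifiable_hyperoctahedral C1 \<longrightarrow> simplifiable_hyperoctahedral C2 \<longrightarrow>
           C1 \<subseteq> C2 \<longrightarrow> Fcat C1 \<subseteq> Fcat C2)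
    \<and> (\<forall>H1 H2. proper_S0_inv_subgroup_of_E H1 \<longrightarrow> proper_S0_inv_subgroup_of_E H2 \<longrightarrow>
           H1 \<subseteq> H2 \<longrightarrow> CH H1 \<subseteq> CH H2)"
proof -
  have Fcat_proper: "proper_S0_inv_subgroup_of_E (Fcat C)" if "simplifiable_hyperoctahedral C" for C
    using that by (intro simplifiable_hyperoctahedral_category.Fcat_proper_S0_subgroup
        simplifiable_hyperoctahedral_category_intro)
  have CH_Fcat: "CH (Fcat C) = C" if "simplifiable_hyperoctahedral C" for C
    using that by (intro simplifiable_hyperoctahedral_category.CH_Fcat
        simplifiable_hyperoctahedral_category_intro)
  have CH_props: "simplifiable_hyperoctahedral (CH H) \<and> Fcat (CH H) = H"
    if "proper_S0_inv_subgroup_of_E H" for H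
    using that proper_S0_subgroup.simplifiable_hyperoctahedral_CH proper_S0_subgroup.Fcat_CH
      proper_S0_subgroup.intro by blast
  have "bij_betw Fcat {C. simplifiable_hyperoctahedral C} {H. proper_S0_inv_subgroup_of_E H}"
    by (rule bij_betw_byWitness[where f' = CH]) (use Fcat_proper CH_Fcat CH_props in auto)
  then show ?thesis
    using Fcat_proper CH_Fcat CH_props by (intro conjI allI impI Fcat_mono CH_mono) simp_all
qed

end
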